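(* Let $\Lambda\subset\mathbb Z^d$ be finite. For every boundary condition $(\xi,\mathsf b)$ on $\Lambda$, every external field $\mathsf h\in(\mathbb R^+)^\Lambda$ and every $\beta\geq0$, \[ \mathrm d\Psi^{(\xi,\mathsf b)}_{\Lambda,\beta,\mathsf h}[(\omega,\mathsf a)]=\boldsymbol\phi^\xi_{\Lambda,\beta,\mathsf h,\mathsf a}[\omega]\,\mathrm d\mu^{(\xi,\mathsf b)}_{\Lambda,\beta,\mathsf h}(\mathsf a), \] where $\mu^{(\xi,\mathsf b)}_{\Lambda,\beta,\mathsf h}$ is the $\mathsf a$-marginal of $\Psi^{(\xi,\mathsf b)}_{\Lambda,\beta,\mathsf h}$, and \[ \mathrm d\mu^{(\xi,\mathsf b)}_{\Lambda,\beta,\mathsf h}(\mathsf a)=2\,\mathbb 1_{\mathsf a|_{\partial^{\rm ext}\Lambda}=\mathsf b}\frac{Z^{\rm Ising,\xi}_{\Lambda,\beta,\mathsf h,\mathsf a}}{Z^{(\xi,\mathsf b)}_{\Lambda,\beta,\mathsf h}}\prod_{x\in\Lambda}\mathrm d\tilde\rho(\mathsf a_x). \] Moreover, $\mu^0_{\Lambda,\beta,\mathsf h}$ (the case of free boundary condition) is the law of the absolute value field $(|\varphi_x|)_{x\in\Lambda}$ under the $\varphi^4$ measure $\nu_{\Lambda,\beta,\mathsf h}$.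
   Context: Fix $g>0,a\in\mathbb R$; $\rho_{g,a}$ has density $\propto e^{-gt^4-at^2}$ on $\mathbb R$ and $\tilde\rho$ is the law of $|X|$, $X\sim\rho_{g,a}$. For finite $\Lambda$, $\nu_{\Lambda,\beta,\mathsf h}$ is the probability measure on $\mathbb R^\Lambda$ with density $\propto\exp(\beta\sum_{xy\in E(\Lambda)}\varphi_x\varphi_y+\beta\sum_{x}\mathsf h_x\varphi_x)\prod_x\mathrm d\rho_{g,a}(\varphi_x)$, $E(\Lambda)$ the nearest-neighbour edges inside $\Lambda$. Let $\partial^{\rm ext}\Lambda=\{x\notin\Lambda:\exists y\in\Lambda,y\sim x\}$, $\overline\Lambda=\Lambda\cup\partial^{\rm ext}\Lambda$, $\overline E(\Lambda)$ the nearest-neighbour edges with at least one endpoint in $\Lambda$. Given $\mathsf h\in(\mathbb R^+)^\Lambda$, add a ghost vertex $\mathfrak g$ and set $\overline E(\Lambda[\mathsf h])=\overline E(\Lambda)\cup\{x\mathfrak g: x\in\Lambda,\mathsf h_x\neq0\}$. A boundary condition is $(\xi,\mathsf b)$: $\xi$ a partition of $\partial^{\rm ext}\Lambda$, $\mathsf b\in(\mathbb R^+)^{\partial^{\rm ext}\Lambda}$; free means $\xi$ all singletons and $\mathsf b\equiv0$. For $\omega\in\{0,1\}^{\overline E(\Lambda[\mathsf h])}$, $k^\xi(\omega)$ is the number of connected components of the graph on $\overline\Lambda\cup\{\mathfrak g\}$ with edges $\{e:\omega_e=1\}$ after identifying the vertices within each class of $\xi$. Write $p(\beta,\mathsf a)_{xy}=1-e^{-2\beta\mathsf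 a_x\mathsf a_y}$ and $p(\beta,\mathsf h,\mathsf a)_{x\mathfrak g}=1-e^{-2\beta\mathsf h_x\mathsf a_x}$. $\Psi^{(\xi,\mathsf b)}_{\Lambda,\beta,\mathsf h}$ is the probability measure on $(\omega,\mathsf a)\in\{0,1\}^{\overline E(\Lambda[\mathsf h])}\times(\mathbb R^+)^{\overline\Lambda}$ given by $\mathrm d\Psi=\frac{\mathbb 1_{\mathsf a|_{\partial^{\rm ext}\Lambda}=\mathsf b}}{Z^{(\xi,\mathsf b)}_{\Lambda,\beta,\mathsf h}}\prod_{xy\in\overline E(\Lambda)}\sqrt{1-p_{xy}}\big(\tfrac{p_{xy}}{1-p_{xy}}\big)^{\omega_{xy}}\prod_{x\in\Lambda:\mathsf h_x\ne0}\sqrt{1-p_{x\mathfrak g}}\big(\tfrac{p_{x\mathfrak g}}{1-p_{x\mathfrak g}}\big)^{\omega_{x\mathfrak g}}2^{k^\xi(\omega)}\prod_{x\in\Lambda}\mathrm d\tilde\rho(\mathsf a_x)$, with $Z^{(\xi,\mathsf b)}_{\Lambda,\beta,\mathsf h}$ the normalisation constant. For $\mathsf a\in(\mathbb R^+)^{\overline\Lambda}$, $\boldsymbol\phi^\xi_{\Lambda,\beta,\mathsf h,\mathsf a}$ is the probability measure on $\{0,1\}^{\overline E(\Lambda[\mathsf h])}$ with weights proportional to $\prod_{xy\in\overline E(\Lambda)}\big(\frac{p(\beta,\mathsf a)_{xy}}{1-p(\beta,\mathsf a)_{xy}}\big)^{\omega_{xy}}\prod_{x}\big(\frac{p(\beta,\mathsf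 h,\mathsf a)_{x\mathfrak g}}{1-p(\beta,\mathsf h,\mathsf a)_{x\mathfrak g}}\big)^{\omega_{x\mathfrak g}}2^{k^\xi(\omega)}$. $Z^{\rm Ising,\xi}_{\Lambda,\beta,\mathsf h,\mathsf a}=\sum_{\sigma}\exp\big(\beta\sum_{xy\in\overline E(\Lambda)}\mathsf a_x\mathsf a_y\sigma_x\sigma_y+\beta\sum_{x\in\Lambda}\mathsf h_x\mathsf a_x\sigma_x\big)$, the sum over $\sigma\in\{\pm1\}^{\overline\Lambda}$ constant on each class of $\xi$. *)

theory Defs
  imports "HOL-Probability.Probability" "HOL-Library.Disjoint_Sets"
begin

type_synonym 'd site = "int ^ 'd"
type_synonym 'd vtx = "'d site option"   (* None = ghost vertex g *)
type_synonym 'd edge = "'d vtx set"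

definition phi4_density :: "real \<Rightarrow> real \<Rightarrow> real \<Rightarrow> real" where
  "phi4_density g a t = exp (- g * t ^ 4 - a * t ^ 2)"

definition rho :: "real \<Rightarrow> real \<Rightarrow> real measure" where
  "rho g a = density lborel (\<lambda>t. ennreal (phi4_density g a t /
      (\<integral>s. phi4_density g a s \<partial>lborel)))"

definition rho_tilde :: "real \<Rightarrow> real \<Rightarrow> real measure" where
  "rho_tilde g a = distr (rho g a) borel abs"

definition adj :: "'d::finite site \<Rightarrow> 'd site \<Rightarrow> bool" where
  "adj x y \<longleftrightarrow> (\<Sum>i\<in>UNIV. \<bar>x $ i - y $ i\<bar>) = 1"

definition ext_bd :: "'d::finite site set \<Rightarrow> 'd site set" where
  "ext_bd \<Lambda> = {x. x \<notin> \<Lambda> \<and> (\<exists>y\<in>\<Lambda>. adj y x)}"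

definition Lbar :: "'d::finite site set \<Rightarrow> 'd site set" where
  "Lbar \<Lambda> = \<Lambda> \<union> ext_bd \<Lambda>"

definition inner_edges :: "'d::finite site set \<Rightarrow> 'd edge set" where
  "inner_edges \<Lambda> = {{Some x, Some y} | x y. x \<in> \<Lambda> \<and> y \<in> \<Lambda> \<and> adj x y}"

definition bar_edges :: "'d::finite site set \<Rightarrow> 'd edge set" where
  "bar_edges \<Lambda> = {{Some x, Some y} | x y. x \<in> \<Lambda> \<and> adj x y}"

definition ghost_edges :: "'d::finite site set \<Rightarrow> ('d site \<Rightarrow> real) \<Rightarrow> 'd edge set" where
  "ghost_edges \<Lambda> h = {{Some x, None} | x. x \<in> \<Lambda> \<and> h x \<noteq> 0}"

definition all_edges :: "'d::finite site set \<Rightarrow> ('d site \<Rightarrow> real) \<Rightarrow> 'd edge set" where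
  "all_edges \<Lambda> h = bar_edges \<Lambda> \<union> ghost_edges \<Lambda> h"

definition verts :: "'d::finite site set \<Rightarrow> 'd vtx set" where
  "verts \<Lambda> = Some ` Lbar \<Lambda> \<union> {None}"

definition configs :: "'d edge set \<Rightarrow> ('d edge \<Rightarrow> bool) set" where
  "configs E = PiE E (\<lambda>_. UNIV)"

definition num_clusters ::
  "'d::finite site set \<Rightarrow> 'd site set set \<Rightarrow> 'd edge set \<Rightarrow> ('d edge \<Rightarrow> bool) \<Rightarrow> nat" where
  "num_clusters \<Lambda> \<xi> E \<omega> =
     (let R = {(u, v). {u, v} \<in> E \<and> \<omega> {u, v}}
              \<union> {(Some x, Some y) | x y. \<exists>C\<in>\<xi>. x \<in> C \<and> y \<in> C}
      in card (verts \<Lambda> // ((R \<union> R\<inverse>)\<^sup>*)))"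

text \<open>Coupling of an edge: a_x a_y for a lattice edge xy, h_x a_x for a ghost edge x g.\<close>
definition coupling :: "('d site \<Rightarrow> real) \<Rightarrow> ('d site \<Rightarrow> real) \<Rightarrow> 'd edge \<Rightarrow> real" where
  "coupling h a e = (if None \<in> e then (\<Sum>x\<in>{x. Some x \<in> e}. h x * a x)
                     else (\<Prod>x\<in>{x. Some x \<in> e}. a x))"

definition edge_p :: "real \<Rightarrow> ('d site \<Rightarrow> real) \<Rightarrow> ('d site \<Rightarrow> real) \<Rightarrow> 'd edge \<Rightarrow> real" where
  "edge_p \<beta> h a e = 1 - exp (- 2 * \<beta> * coupling h a e)"

definition fk_weight ::
  "'d::finite site set \<Rightarrow> 'd site set set \<Rightarrow> real \<Rightarrow> ('d site \<Rightarrow> real) \<Rightarrow> ('d site \<Rightarrow> real)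
     \<Rightarrow> ('d edge \<Rightarrow> bool) \<Rightarrow> real" where
  "fk_weight \<Lambda> \<xi> \<beta> h a \<omega> =
     (\<Prod>e\<in>all_edges \<Lambda> h.
        (edge_p \<beta> h a e / (1 - edge_p \<beta> h a e)) ^ (if \<omega> e then 1 else 0))
     * 2 ^ num_clusters \<Lambda> \<xi> (all_edges \<Lambda> h) \<omega>"

definition phiFK ::
  "'d::finite site set \<Rightarrow> 'd site set set \<Rightarrow> real \<Rightarrow> ('d site \<Rightarrow> real) \<Rightarrow> ('d site \<Rightarrow> real)
     \<Rightarrow> ('d edge \<Rightarrow> bool) \<Rightarrow> real" where
  "phiFK \<Lambda> \<xi> \<beta> h a \<omega> = fk_weight \<Lambda> \<xi> \<beta> h a \<omega> /
     (\<Sum>\<omega>'\<in>configs (all_edges \<Lambda> h). fk_weight \<Lambda> \<xi> \<beta> h a \<omega>')"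

definition A_base ::
  "real \<Rightarrow> real \<Rightarrow> 'd::finite site set \<Rightarrow> ('d site \<Rightarrow> real) \<Rightarrow> ('d site \<Rightarrow> real) measure" where
  "A_base g a \<Lambda> b = PiM (Lbar \<Lambda>) (\<lambda>x. if x \<in> \<Lambda> then rho_tilde g a else return borel (b x))"

definition bc_ind :: "'d::finite site set \<Rightarrow> ('d site \<Rightarrow> real) \<Rightarrow> ('d site \<Rightarrow> real) \<Rightarrow> real" where
  "bc_ind \<Lambda> b t = (if \<forall>x\<in>ext_bd \<Lambda>. t x = b x then 1 else 0)"

definition psi_weight ::
  "'d::finite site set \<Rightarrow> 'd site set set \<Rightarrow> ('d site \<Rightarrow> real) \<Rightarrow> real \<Rightarrow> ('d site \<Rightarrow> real)
     \<Rightarrow> ('d edge \<Rightarrow> bool) \<times> ('d site \<Rightarrow> real) \<Rightarrow> real" where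
  "psi_weight \<Lambda> \<xi> b \<beta> h z = (case z of (\<omega>, t) \<Rightarrow>
     bc_ind \<Lambda> b t *
     (\<Prod>e\<in>all_edges \<Lambda> h. sqrt (1 - edge_p \<beta> h t e) *
        (edge_p \<beta> h t e / (1 - edge_p \<beta> h t e)) ^ (if \<omega> e then 1 else 0))
     * 2 ^ num_clusters \<Lambda> \<xi> (all_edges \<Lambda> h) \<omega>)"

definition joint_base ::
  "real \<Rightarrow> real \<Rightarrow> 'd::finite site set \<Rightarrow> ('d site \<Rightarrow> real) \<Rightarrow> ('d site \<Rightarrow> real)
     \<Rightarrow> (('d edge \<Rightarrow> bool) \<times> ('d site \<Rightarrow> real)) measure" where
  "joint_base g a \<Lambda> b h = count_space (configs (all_edges \<Lambda> h)) \<Otimes>\<^sub>M A_base g a \<Lambda> b"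

definition Z_Psi ::
  "real \<Rightarrow> real \<Rightarrow> 'd::finite site set \<Rightarrow> 'd site set set \<Rightarrow> ('d site \<Rightarrow> real) \<Rightarrow> real
     \<Rightarrow> ('d site \<Rightarrow> real) \<Rightarrow> real" where
  "Z_Psi g a \<Lambda> \<xi> b \<beta> h = (\<integral>z. psi_weight \<Lambda> \<xi> b \<beta> h z \<partial>joint_base g a \<Lambda> b h)"

definition Psi ::
  "real \<Rightarrow> real \<Rightarrow> 'd::finite site set \<Rightarrow> 'd site set set \<Rightarrow> ('d site \<Rightarrow> real) \<Rightarrow> real
     \<Rightarrow> ('d site \<Rightarrow> real) \<Rightarrow> (('d edge \<Rightarrow> bool) \<times> ('d site \<Rightarrow> real)) measure" where
  "Psi g a \<Lambda> \<xi> b \<beta> h = density (joint_base g a \<Lambda> b h)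
     (\<lambda>z. ennreal (psi_weight \<Lambda> \<xi> b \<beta> h z / Z_Psi g a \<Lambda> \<xi> b \<beta> h))"

definition mu ::
  "real \<Rightarrow> real \<Rightarrow> 'd::finite site set \<Rightarrow> 'd site set set \<Rightarrow> ('d site \<Rightarrow> real) \<Rightarrow> real
     \<Rightarrow> ('d site \<Rightarrow> real) \<Rightarrow> ('d site \<Rightarrow> real) measure" where
  "mu g a \<Lambda> \<xi> b \<beta> h = distr (Psi g a \<Lambda> \<xi> b \<beta> h) (A_base g a \<Lambda> b) snd"

definition Z_Ising ::
  "'d::finite site set \<Rightarrow> 'd site set set \<Rightarrow> real \<Rightarrow> ('d site \<Rightarrow> real) \<Rightarrow> ('d site \<Rightarrow> real) \<Rightarrow> real" where
  "Z_Ising \<Lambda> \<xi> \<beta> h t =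
     (\<Sum>\<sigma>\<in>{\<sigma> \<in> PiE (Lbar \<Lambda>) (\<lambda>_. {-1, 1}). \<forall>C\<in>\<xi>. \<forall>x\<in>C. \<forall>y\<in>C. \<sigma> x = \<sigma> y}.
        exp (\<beta> * (\<Sum>e\<in>bar_edges \<Lambda>. \<Prod>x\<in>{x. Some x \<in> e}. t x * \<sigma> x)
             + \<beta> * (\<Sum>x\<in>\<Lambda>. h x * t x * \<sigma> x)))"

definition nu_weight :: "'d::finite site set \<Rightarrow> real \<Rightarrow> ('d site \<Rightarrow> real) \<Rightarrow> ('d site \<Rightarrow> real) \<Rightarrow> real" where
  "nu_weight \<Lambda> \<beta> h \<phi> = exp (\<beta> * (\<Sum>e\<in>inner_edges \<Lambda>. \<Prod>x\<in>{x. Some x \<in> e}. \<phi> x)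
                               + \<beta> * (\<Sum>x\<in>\<Lambda>. h x * \<phi> x))"

definition nu ::
  "real \<Rightarrow> real \<Rightarrow> 'd::finite site set \<Rightarrow> real \<Rightarrow> ('d site \<Rightarrow> real) \<Rightarrow> ('d site \<Rightarrow> real) measure" where
  "nu g a \<Lambda> \<beta> h = density (PiM \<Lambda> (\<lambda>_. rho g a))
     (\<lambda>\<phi>. ennreal (nu_weight \<Lambda> \<beta> h \<phi> / (\<integral>\<psi>. nu_weight \<Lambda> \<beta> h \<psi> \<partial>PiM \<Lambda> (\<lambda>_. rho g a))))"

definition free_xi :: "'d::finite site set \<Rightarrow> 'd site set set" where
  "free_xi \<Lambda> = {{x} | x. x \<in> ext_bd \<Lambda>}"

definition free_b :: "'d site \<Rightarrow> real" where
  "free_b = (\<lambda>_. 0)"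

end

theory Submission
  imports Defs
begin

(* Summing the weight of Psi over the bond configurations omega: the factor 2^k(omega) counts the
   +-1 spin assignments that are constant on the clusters of omega (ghost vertex and boundary
   classes of xi included). Exchanging the two sums, the bond variables factorise edge by edge,
   each edge e = {u, v} contributing exp (beta J_e s_u s_v), so one obtains an Ising partition
   function with a ghost spin; a global spin flip shows that fixing the ghost spin costs a factor 2,
   whence 2 Z^Ising. This is the density of the a-marginal mu, and dividing the weight of Psi by it
   leaves the random-cluster measure phi^xi as the conditional law of the bonds.
   For the free boundary condition, b = 0 kills every edge leaving Lambda, so Z^Ising becomes the sum
   of the phi^4 weight over the 2^|Lambda| sign patterns of a field with absolute values a. Since
   rho is symmetric, the same sign sum is the density of |phi| under nu with respect to the product
   of rho tilde, and the two normalising constants agree. *)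

section \<open>The Edwards-Sokal identity on a finite graph\<close>

lemma card_PiE_constant_on_classes:
  assumes "finite A" and "equiv A r"
  shows "card {\<sigma> \<in> PiE A (\<lambda>_. T). \<forall>(x, y)\<in>r. \<sigma> x = \<sigma> y} = card T ^ card (A // r)"
proof -
  define S where "S = {\<sigma> \<in> PiE A (\<lambda>_. T). \<forall>(x, y)\<in>r. \<sigma> x = \<sigma> y}"
  define lift where "lift \<tau> = (\<lambda>x\<in>A. \<tau> (r `` {x}))" for \<tau> :: "'a set \<Rightarrow> 'b"
  have "inj_on lift (PiE (A // r) (\<lambda>_. T))"
  proof (rule inj_onI, rule extensionalityI[where A = "A // r"])
    fix \<tau>1 \<tau>2 C
    assume "\<tau>1 \<in> PiE (A // r) (\<lambda>_. T)" "\<tau>2 \<in> PiE (A // r) (\<lambda>_. T)" "lift \<tau>1 = lift \<tau>2"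
      and "C \<in> A // r"
    then show "\<tau>1 C = \<tau>2 C"
      by (elim quotientE) (metis lift_def restrict_apply')
  qed (auto simp: PiE_iff)
  moreover have "lift ` PiE (A // r) (\<lambda>_. T) = S"
  proof (intro equalityI subsetI)
    fix \<sigma> assume "\<sigma> \<in> lift ` PiE (A // r) (\<lambda>_. T)"
    then show "\<sigma> \<in> S"
      using assms(2) by (auto simp: S_def lift_def equiv_class_eq_iff intro: quotientI)
  next
    fix \<sigma> assume \<sigma>: "\<sigma> \<in> S"
    have class_image: "\<sigma> ` (r `` {x}) = {\<sigma> x}" if "x \<in> A" for x
      using \<sigma> assms(2) that by (auto simp: S_def dest: equiv_class_self)
    let ?\<tau> = "\<lambda>C\<in>A // r. the_elem (\<sigma> ` C)"
    have "?\<tau> \<in> PiE (A // r) (\<lambda>_. T)"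
      using \<sigma> by (auto elim!: quotientE simp: class_image S_def)
    moreover have "\<sigma> = lift ?\<tau>"
    proof (rule extensionalityI[where A = A])
      show "\<sigma> x = lift ?\<tau> x" if "x \<in> A" for x
        using that by (simp add: lift_def class_image quotientI)
    qed (use \<sigma> in \<open>auto simp: S_def lift_def PiE_iff\<close>)
    ultimately show "\<sigma> \<in> lift ` PiE (A // r) (\<lambda>_. T)" by blast
  qed
  moreover have "finite (A // r)"
    using assms by (simp add: finite_quotient equiv_type)
  ultimately show ?thesis
    unfolding S_def[symmetric] by (metis card_image card_funcsetE)
qed

lemma card_PiE_constant_on_components:
  assumes "finite A" and "R \<subseteq> A \<times> A"
  shows "card {\<sigma> \<in> PiE A (\<lambda>_. T). \<forall>(x, y)\<in>R. \<sigma> x = \<sigma> y} = card T ^ card (A // (R \<union> R\<inverse>)\<^sup>*)"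
proof -
  let ?r = "(R \<union> R\<inverse>)\<^sup>* \<inter> A \<times> A"
  have closed: "y \<in> A" if "(x, y) \<in> (R \<union> R\<inverse>)\<^sup>*" "x \<in> A" for x y
    using that by (induction rule: rtrancl_induct) (use assms(2) in auto)
  have "sym ((R \<union> R\<inverse>)\<^sup>*)"
    by (simp add: sym_Un_converse sym_rtrancl)
  then have "equiv A ?r"
    by (auto simp: equiv_def refl_on_def sym_def trans_def dest: rtrancl_trans)
  moreover have "A // (R \<union> R\<inverse>)\<^sup>* = A // ?r"
    unfolding quotient_def using closed by blast
  moreover have "(\<forall>(x, y)\<in>R. \<sigma> x = \<sigma> y) \<longleftrightarrow> (\<forall>(x, y)\<in>?r. \<sigma> x = \<sigma> y)" for \<sigma> :: "'a \<Rightarrow> 'b"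
  proof
    assume R: "\<forall>(x, y)\<in>R. \<sigma> x = \<sigma> y"
    have "\<sigma> x = \<sigma> y" if "(x, y) \<in> (R \<union> R\<inverse>)\<^sup>*" for x y
      using that by (induction rule: rtrancl_induct) (use R in auto)
    then show "\<forall>(x, y)\<in>?r. \<sigma> x = \<sigma> y" by blast
  qed (use assms(2) in blast)
  ultimately show ?thesis
    using card_PiE_constant_on_classes[OF assms(1)] by simp
qed

lemma prod_of_bool: "finite A \<Longrightarrow> (\<Prod>x\<in>A. of_bool (P x)) = (of_bool (\<forall>x\<in>A. P x) :: 'a::comm_semiring_1)"
  by (induction rule: finite_induct) auto

lemma sum_bond_weights_eq_exp:
  fixes \<beta> J s s' :: real
  assumes "s \<in> {-1, 1}" and "s' \<in> {-1, 1}" and p: "p = 1 - exp (- 2 * \<beta> * J)"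
  shows "(\<Sum>b\<in>UNIV. sqrt (1 - p) * (p / (1 - p)) ^ (if b then 1 else 0) * of_bool (b \<longrightarrow> s = s'))
           = exp (\<beta> * J * (s * s'))"
proof -
  have sqrt: "sqrt (1 - p) = exp (- \<beta> * J)"
    by (rule real_sqrt_unique) (simp_all add: p power2_eq_square flip: exp_add)
  have "exp (- \<beta> * J) + exp (- \<beta> * J) * (p / (1 - p)) = exp (- \<beta> * J) / exp (- 2 * \<beta> * J)"
    by (simp add: p field_simps)
  also have "\<dots> = exp (\<beta> * J)"
    by (simp flip: exp_diff)
  finally show ?thesis
    using assms(1,2) by (auto simp: UNIV_bool sqrt)
qed

definition open_pairs :: "'v set set \<Rightarrow> ('v set \<Rightarrow> bool) \<Rightarrow> ('v \<times> 'v) set" where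
  "open_pairs E \<omega> = {(u, v). {u, v} \<in> E \<and> \<omega> {u, v}}"

lemma open_pairs_constant_iff:
  assumes "\<And>e. e \<in> E \<Longrightarrow> \<exists>u v. e = {u, v}"
  shows "(\<forall>(u, v)\<in>open_pairs E \<omega>. \<sigma> u = \<sigma> v) \<longleftrightarrow> (\<forall>e\<in>E. \<omega> e \<longrightarrow> (\<forall>u\<in>e. \<forall>v\<in>e. \<sigma> u = \<sigma> v))"
proof
  assume agree: "\<forall>(u, v)\<in>open_pairs E \<omega>. \<sigma> u = \<sigma> v"
  show "\<forall>e\<in>E. \<omega> e \<longrightarrow> (\<forall>u\<in>e. \<forall>v\<in>e. \<sigma> u = \<sigma> v)"
  proof (intro ballI impI)
    fix e u v assume "e \<in> E" "\<omega> e" "u \<in> e" "v \<in> e"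
    moreover obtain x y where "e = {x, y}"
      using assms \<open>e \<in> E\<close> by blast
    ultimately have "u = v \<or> (u, v) \<in> open_pairs E \<omega>"
      by (auto simp: open_pairs_def insert_commute)
    then show "\<sigma> u = \<sigma> v"
      using agree by auto
  qed
qed (auto simp: open_pairs_def)

lemma two_pow_clusters_eq_sum_spins:
  fixes A :: "'v set" and E :: "'v set set" and Q :: "('v \<times> 'v) set"
    and \<omega> :: "'v set \<Rightarrow> bool"
  assumes "finite A"
    and edges: "\<And>e. e \<in> E \<Longrightarrow> \<exists>u\<in>A. \<exists>v\<in>A. e = {u, v}"
    and "Q \<subseteq> A \<times> A"
  defines "S \<equiv> {\<sigma> \<in> PiE A (\<lambda>_. {-1, 1::real}). \<forall>(u, v)\<in>Q. \<sigma> u = \<sigma> v}"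
    and "R \<equiv> open_pairs E \<omega> \<union> Q"
  shows "(2::real) ^ card (A // (R \<union> R\<inverse>)\<^sup>*)
           = (\<Sum>\<sigma>\<in>S. of_bool (\<forall>e\<in>E. \<omega> e \<longrightarrow> (\<forall>u\<in>e. \<forall>v\<in>e. \<sigma> u = \<sigma> v)))"
proof -
  have R: "R \<subseteq> A \<times> A"
    using edges assms(3) by (fastforce simp: R_def open_pairs_def doubleton_eq_iff)
  have "(2::real) ^ card (A // (R \<union> R\<inverse>)\<^sup>*)
      = card {\<sigma> \<in> PiE A (\<lambda>_. {-1, 1::real}). \<forall>(u, v)\<in>R. \<sigma> u = \<sigma> v}"
    using card_PiE_constant_on_components[OF assms(1) R, of "{-1, 1::real}"] by simp
  also have "{\<sigma> \<in> PiE A (\<lambda>_. {-1, 1::real}). \<forall>(u, v)\<in>R. \<sigma> u = \<sigma> v}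
      = {\<sigma> \<in> S. \<forall>e\<in>E. \<omega> e \<longrightarrow> (\<forall>u\<in>e. \<forall>v\<in>e. \<sigma> u = \<sigma> v)}"
  proof -
    have doubletons: "\<And>e. e \<in> E \<Longrightarrow> \<exists>u v. e = {u, v}"
      using edges by blast
    show ?thesis
      unfolding S_def R_def ball_Un by (simp only: open_pairs_constant_iff[OF doubletons]) auto
  qed
  also have "real (card \<dots>) = (\<Sum>\<sigma>\<in>S. of_bool (\<forall>e\<in>E. \<omega> e \<longrightarrow> (\<forall>u\<in>e. \<forall>v\<in>e. \<sigma> u = \<sigma> v)))"
  proof -
    have "finite S"
      using finite_PiE[OF assms(1), of "\<lambda>_. {-1, 1::real}"] unfolding S_def
      by (rule rev_finite_subset) auto
    then show ?thesis
      by (simp add: Int_def)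
  qed
  finally show ?thesis .
qed

lemma Edwards_Sokal_sum:
  fixes A :: "'v set" and E :: "'v set set" and Q :: "('v \<times> 'v) set"
    and J p :: "'v set \<Rightarrow> real" and \<beta> :: real
  assumes "finite A" and "finite E"
    and edges: "\<And>e. e \<in> E \<Longrightarrow> \<exists>u v. e = {u, v} \<and> u \<noteq> v \<and> u \<in> A \<and> v \<in> A"
    and "Q \<subseteq> A \<times> A"
    and p: "\<And>e. p e = 1 - exp (- 2 * \<beta> * J e)"
  defines "R \<omega> \<equiv> open_pairs E \<omega> \<union> Q"
  shows "(\<Sum>\<omega>\<in>PiE E (\<lambda>_. UNIV).
            (\<Prod>e\<in>E. sqrt (1 - p e) * (p e / (1 - p e)) ^ (if \<omega> e then 1 else 0))
            * 2 ^ card (A // (R \<omega> \<union> (R \<omega>)\<inverse>)\<^sup>*))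
       = (\<Sum>\<sigma>\<in>{\<sigma> \<in> PiE A (\<lambda>_. {-1, 1}). \<forall>(u, v)\<in>Q. \<sigma> u = \<sigma> v}.
            \<Prod>e\<in>E. exp (\<beta> * J e * (\<Prod>v\<in>e. \<sigma> v)))"
proof -
  define S where "S = {\<sigma> \<in> PiE A (\<lambda>_. {-1, 1::real}). \<forall>(u, v)\<in>Q. \<sigma> u = \<sigma> v}"
  define w where "w e b = sqrt (1 - p e) * (p e / (1 - p e)) ^ (if b then 1 else 0)"
    for e and b :: bool
  define agree where "agree \<sigma> e \<longleftrightarrow> (\<forall>u\<in>e. \<forall>v\<in>e. \<sigma> u = \<sigma> v)"
    for \<sigma> :: "'v \<Rightarrow> real" and e
  have "(\<Sum>\<omega>\<in>PiE E (\<lambda>_. UNIV). (\<Prod>e\<in>E. w e (\<omega> e)) * 2 ^ card (A // (R \<omega> \<union> (R \<omega>)\<inverse>)\<^sup>*))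
      = (\<Sum>\<omega>\<in>PiE E (\<lambda>_. UNIV). \<Sum>\<sigma>\<in>S. \<Prod>e\<in>E. w e (\<omega> e) * of_bool (\<omega> e \<longrightarrow> agree \<sigma> e))"
  proof -
    have "\<exists>u\<in>A. \<exists>v\<in>A. e = {u, v}" if "e \<in> E" for e
      using edges[OF that] by blast
    then show ?thesis
      using two_pow_clusters_eq_sum_spins[OF assms(1) _ assms(4)] assms(2)
      by (simp add: S_def R_def agree_def sum_distrib_left prod.distrib prod_of_bool)
  qed
  also have "\<dots> = (\<Sum>\<sigma>\<in>S. \<Sum>\<omega>\<in>PiE E (\<lambda>_. UNIV). \<Prod>e\<in>E. w e (\<omega> e) * of_bool (\<omega> e \<longrightarrow> agree \<sigma> e))"
    by (rule sum.swap)
  also have "\<dots> = (\<Sum>\<sigma>\<in>S. \<Prod>e\<in>E. \<Sum>b\<in>UNIV. w e b * of_bool (b \<longrightarrow> agree \<sigma> e))"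
    by (subst prod_sum_PiE) (use assms(2) in auto)
  also have "\<dots> = (\<Sum>\<sigma>\<in>S. \<Prod>e\<in>E. exp (\<beta> * J e * (\<Prod>v\<in>e. \<sigma> v)))"
  proof (intro sum.cong prod.cong refl)
    fix \<sigma> e assume \<sigma>: "\<sigma> \<in> S" and "e \<in> E"
    then obtain u v where uv: "e = {u, v}" "u \<noteq> v" "u \<in> A" "v \<in> A"
      using edges by blast
    have "\<sigma> u \<in> {-1, 1}" "\<sigma> v \<in> {-1, 1}"
      using \<sigma> uv by (auto simp: S_def PiE_iff)
    moreover have "agree \<sigma> e \<longleftrightarrow> \<sigma> u = \<sigma> v" and "(\<Prod>v\<in>e. \<sigma> v) = \<sigma> u * \<sigma> v"
      using uv by (auto simp: agree_def)
    ultimately show "(\<Sum>b\<in>UNIV. w e b * of_bool (b \<longrightarrow> agree \<sigma> e))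
        = exp (\<beta> * J e * (\<Prod>v\<in>e. \<sigma> v))"
      unfolding w_def by (simp only: sum_bond_weights_eq_exp[OF _ _ p])
  qed
  finally show ?thesis
    by (simp add: S_def w_def)
qed

lemma sum_sign_flip_invariant:
  fixes F :: "('v \<Rightarrow> real) \<Rightarrow> real"
  assumes "finite A" and "r \<in> A" and S: "S \<subseteq> PiE A (\<lambda>_. {-1, 1})"
    and flip_S: "\<And>\<sigma>. \<sigma> \<in> S \<Longrightarrow> (\<lambda>v\<in>A. - \<sigma> v) \<in> S"
    and flip_F: "\<And>\<sigma>. \<sigma> \<in> S \<Longrightarrow> F (\<lambda>v\<in>A. - \<sigma> v) = F \<sigma>"
  shows "(\<Sum>\<sigma>\<in>S. F \<sigma>) = 2 * (\<Sum>\<sigma>\<in>{\<sigma> \<in> S. \<sigma> r = 1}. F \<sigma>)"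
proof -
  define flip where "flip \<sigma> = (\<lambda>v\<in>A. - \<sigma> v)" for \<sigma> :: "'v \<Rightarrow> real"
  let ?P = "{\<sigma> \<in> S. \<sigma> r = 1}" and ?N = "{\<sigma> \<in> S. \<sigma> r = -1}"
  have "finite S"
    using finite_PiE[OF assms(1), of "\<lambda>_. {-1, 1}"] S by (rule rev_finite_subset) simp
  have flip_flip: "flip (flip \<sigma>) = \<sigma>" if "\<sigma> \<in> S" for \<sigma>
    using that S by (auto simp: flip_def PiE_iff extensional_def fun_eq_iff)
  have "flip \<sigma> r = - \<sigma> r" for \<sigma>
    using \<open>r \<in> A\<close> by (simp add: flip_def)
  then have "bij_betw flip ?P ?N"
    by (intro bij_betwI[where g = flip]) (auto simp: flip_flip flip_S[folded flip_def])
  then have "(\<Sum>\<sigma>\<in>?N. F \<sigma>) = (\<Sum>\<sigma>\<in>?P. F (flip \<sigma>))"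
    by (rule sum.reindex_bij_betw[symmetric])
  also have "\<dots> = (\<Sum>\<sigma>\<in>?P. F \<sigma>)"
    by (intro sum.cong refl) (simp add: flip_def flip_F)
  moreover have "(\<Sum>\<sigma>\<in>?P \<union> ?N. F \<sigma>) = (\<Sum>\<sigma>\<in>?P. F \<sigma>) + (\<Sum>\<sigma>\<in>?N. F \<sigma>)"
    by (rule sum.union_disjoint) (use \<open>finite S\<close> in auto)
  moreover have "?P \<union> ?N = S"
    using S \<open>r \<in> A\<close> by (auto simp: PiE_iff)
  ultimately show ?thesis
    by simp
qed

section \<open>The box with its ghost vertex\<close>

lemma adj_imp_neq: "adj x y \<Longrightarrow> x \<noteq> y"
  by (auto simp: adj_def)

lemma finite_adj: "finite {y. adj x (y :: 'd::finite site)}"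
proof (rule finite_subset)
  show "{y. adj x y} \<subseteq> vec_nth -` PiE UNIV (\<lambda>i. {x $ i - 1 .. x $ i + 1})"
  proof
    fix y assume "y \<in> {y. adj x y}"
    have bound: "\<bar>x $ i - y $ i\<bar> \<le> 1" for i
    proof -
      have "\<bar>x $ i - y $ i\<bar> \<le> (\<Sum>j\<in>UNIV. \<bar>x $ j - y $ j\<bar>)"
        by (rule member_le_sum) auto
      also have "\<dots> = 1"
        using \<open>y \<in> {y. adj x y}\<close> by (simp add: adj_def)
      finally show ?thesis .
    qed
    have "y $ i \<in> {x $ i - 1 .. x $ i + 1}" for i
      using bound[of i] by (auto simp: abs_le_iff)
    then show "y \<in> vec_nth -` PiE UNIV (\<lambda>i. {x $ i - 1 .. x $ i + 1})"
      by auto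
  qed
  show "finite (vec_nth -` PiE UNIV (\<lambda>i. {x $ i - 1 .. x $ i + 1}))"
    by (intro finite_vimageI finite_PiE) (auto simp: inj_def vec_eq_iff)
qed

lemma finite_ext_bd: "finite \<Lambda> \<Longrightarrow> finite (ext_bd \<Lambda>)"
  by (rule finite_subset[of _ "\<Union>x\<in>\<Lambda>. {y. adj x y}"]) (auto simp: ext_bd_def finite_adj)

lemma finite_Lbar: "finite \<Lambda> \<Longrightarrow> finite (Lbar \<Lambda>)"
  by (simp add: Lbar_def finite_ext_bd)

lemma finite_verts: "finite \<Lambda> \<Longrightarrow> finite (verts \<Lambda>)"
  by (simp add: verts_def finite_Lbar)

lemma None_in_verts [simp]: "None \<in> verts \<Lambda>"
  by (simp add: verts_def)

lemma Some_in_verts_iff [simp]: "Some x \<in> verts \<Lambda> \<longleftrightarrow> x \<in> Lbar \<Lambda>"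
  by (auto simp: verts_def)

lemma adj_in_Lbar: "x \<in> \<Lambda> \<Longrightarrow> adj x y \<Longrightarrow> y \<in> Lbar \<Lambda>"
  by (auto simp: Lbar_def ext_bd_def)

lemma finite_bar_edges: "finite \<Lambda> \<Longrightarrow> finite (bar_edges \<Lambda>)"
  by (rule finite_subset[of _ "(\<lambda>(x, y). {Some x, Some y}) ` (\<Lambda> \<times> Lbar \<Lambda>)"])
     (auto simp: bar_edges_def finite_Lbar intro: adj_in_Lbar)

lemma finite_ghost_edges: "finite \<Lambda> \<Longrightarrow> finite (ghost_edges \<Lambda> h)"
  by (rule finite_subset[of _ "(\<lambda>x. {Some x, None}) ` \<Lambda>"]) (auto simp: ghost_edges_def)

lemma finite_all_edges: "finite \<Lambda> \<Longrightarrow> finite (all_edges \<Lambda> h)"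
  by (simp add: all_edges_def finite_bar_edges finite_ghost_edges)

lemma bar_ghost_edges_disjoint: "bar_edges \<Lambda> \<inter> ghost_edges \<Lambda> h = {}"
  by (auto simp: bar_edges_def ghost_edges_def doubleton_eq_iff)

lemma all_edges_cases:
  assumes "e \<in> all_edges \<Lambda> h"
  obtains (bar) x y where "e = {Some x, Some y}" "x \<in> \<Lambda>" "adj x y"
    | (ghost) x where "e = {Some x, None}" "x \<in> \<Lambda>" "h x \<noteq> 0"
  using assms unfolding all_edges_def bar_edges_def ghost_edges_def by blast

lemma all_edges_doubletons:
  assumes "e \<in> all_edges \<Lambda> h"
  shows "\<exists>u v. e = {u, v} \<and> u \<noteq> v \<and> u \<in> verts \<Lambda> \<and> v \<in> verts \<Lambda>"
  using assms
proof (cases rule: all_edges_cases)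
  case (bar x y)
  then show ?thesis
    using adj_imp_neq[OF bar(3)] adj_in_Lbar[OF bar(2,3)]
    by (intro exI[of _ "Some x"] exI[of _ "Some y"]) (auto simp: verts_def Lbar_def)
next
  case (ghost x)
  then show ?thesis
    by (auto simp: verts_def Lbar_def)
qed

definition boundary_pairs :: "'d site set set \<Rightarrow> ('d vtx \<times> 'd vtx) set" where
  "boundary_pairs \<xi> = {(Some x, Some y) | x y. \<exists>C\<in>\<xi>. x \<in> C \<and> y \<in> C}"

lemma num_clusters_eq:
  "num_clusters \<Lambda> \<xi> E \<omega> = card (verts \<Lambda> //
     ((open_pairs E \<omega> \<union> boundary_pairs \<xi>) \<union> (open_pairs E \<omega> \<union> boundary_pairs \<xi>)\<inverse>)\<^sup>*)"
  by (simp add: num_clusters_def open_pairs_def boundary_pairs_def Let_def)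

lemma boundary_pairs_subset:
  assumes "partition_on (ext_bd \<Lambda>) \<xi>"
  shows "boundary_pairs \<xi> \<subseteq> verts \<Lambda> \<times> verts \<Lambda>"
  using assms by (auto simp: boundary_pairs_def verts_def Lbar_def partition_on_def)

definition with_ghost :: "('d site \<Rightarrow> real) \<Rightarrow> 'd vtx \<Rightarrow> real" where
  "with_ghost \<sigma> v = (case v of None \<Rightarrow> 1 | Some x \<Rightarrow> \<sigma> x)"

lemma coupling_times_spins:
  assumes "e \<in> all_edges \<Lambda> h"
  shows "coupling h t e * (\<Prod>v\<in>e. with_ghost \<sigma> v)
           = (if None \<in> e then (\<Sum>x\<in>{x. Some x \<in> e}. h x * t x * \<sigma> x)
              else (\<Prod>x\<in>{x. Some x \<in> e}. t x * \<sigma> x))"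
  using assms
proof (cases rule: all_edges_cases)
  case (bar x y)
  then have "x \<noteq> y" and "{z. Some z \<in> e} = {x, y}"
    using adj_imp_neq by auto
  then show ?thesis
    using bar by (simp add: coupling_def with_ghost_def)
next
  case (ghost x)
  then have "{z. Some z \<in> e} = {x}"
    by auto
  then show ?thesis
    using ghost by (simp add: coupling_def with_ghost_def)
qed

lemma sum_ghost_edges:
  assumes "finite \<Lambda>" and "\<And>x. h x = 0 \<Longrightarrow> f x = 0"
  shows "(\<Sum>e\<in>ghost_edges \<Lambda> h. \<Sum>x\<in>{x. Some x \<in> e}. f x) = (\<Sum>x\<in>\<Lambda>. f x)"
proof -
  have "ghost_edges \<Lambda> h = (\<lambda>x. {Some x, None}) ` {x\<in>\<Lambda>. h x \<noteq> 0}"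
    by (auto simp: ghost_edges_def)
  moreover have "inj_on (\<lambda>x. {Some x, None}) {x\<in>\<Lambda>. h x \<noteq> 0}"
    by (auto simp: inj_on_def doubleton_eq_iff)
  moreover have "{z. Some z \<in> {Some x, None}} = {x}" for x
    by auto
  ultimately have "(\<Sum>e\<in>ghost_edges \<Lambda> h. \<Sum>x\<in>{x. Some x \<in> e}. f x) = (\<Sum>x\<in>{x\<in>\<Lambda>. h x \<noteq> 0}. f x)"
    by (simp add: sum.reindex)
  also have "\<dots> = (\<Sum>x\<in>\<Lambda>. f x)"
    using assms by (intro sum.mono_neutral_left) auto
  finally show ?thesis .
qed

lemma prod_edge_weights_with_ghost:
  assumes "finite \<Lambda>"
  shows "(\<Prod>e\<in>all_edges \<Lambda> h. exp (\<beta> * coupling h t e * (\<Prod>v\<in>e. with_ghost \<sigma> v)))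
       = exp (\<beta> * (\<Sum>e\<in>bar_edges \<Lambda>. \<Prod>x\<in>{x. Some x \<in> e}. t x * \<sigma> x)
              + \<beta> * (\<Sum>x\<in>\<Lambda>. h x * t x * \<sigma> x))"
proof -
  let ?c = "\<lambda>e. coupling h t e * (\<Prod>v\<in>e. with_ghost \<sigma> v)"
  have "(\<Sum>e\<in>all_edges \<Lambda> h. ?c e) = (\<Sum>e\<in>bar_edges \<Lambda>. ?c e) + (\<Sum>e\<in>ghost_edges \<Lambda> h. ?c e)"
    unfolding all_edges_def using assms bar_ghost_edges_disjoint
    by (intro sum.union_disjoint finite_bar_edges finite_ghost_edges)
  also have "(\<Sum>e\<in>bar_edges \<Lambda>. ?c e) = (\<Sum>e\<in>bar_edges \<Lambda>. \<Prod>x\<in>{x. Some x \<in> e}. t x * \<sigma> x)"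
  proof (intro sum.cong refl)
    fix e assume "e \<in> bar_edges \<Lambda>"
    then have "e \<in> all_edges \<Lambda> h" "None \<notin> e"
      by (auto simp: all_edges_def bar_edges_def)
    then show "?c e = (\<Prod>x\<in>{x. Some x \<in> e}. t x * \<sigma> x)"
      by (simp add: coupling_times_spins)
  qed
  also have "(\<Sum>e\<in>ghost_edges \<Lambda> h. ?c e)
      = (\<Sum>e\<in>ghost_edges \<Lambda> h. \<Sum>x\<in>{x. Some x \<in> e}. h x * t x * \<sigma> x)"
  proof (intro sum.cong refl)
    fix e assume "e \<in> ghost_edges \<Lambda> h"
    then have "e \<in> all_edges \<Lambda> h" "None \<in> e"
      by (auto simp: all_edges_def ghost_edges_def)
    then show "?c e = (\<Sum>x\<in>{x. Some x \<in> e}. h x * t x * \<sigma> x)"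
      by (simp add: coupling_times_spins)
  qed
  also have "\<dots> = (\<Sum>x\<in>\<Lambda>. h x * t x * \<sigma> x)"
    using assms by (rule sum_ghost_edges) simp
  finally have "\<beta> * (\<Sum>e\<in>all_edges \<Lambda> h. ?c e)
      = \<beta> * (\<Sum>e\<in>bar_edges \<Lambda>. \<Prod>x\<in>{x. Some x \<in> e}. t x * \<sigma> x) + \<beta> * (\<Sum>x\<in>\<Lambda>. h x * t x * \<sigma> x)"
    by (simp only: distrib_left)
  moreover have "(\<Prod>e\<in>all_edges \<Lambda> h. exp (\<beta> * coupling h t e * (\<Prod>v\<in>e. with_ghost \<sigma> v)))
      = exp (\<beta> * (\<Sum>e\<in>all_edges \<Lambda> h. ?c e))"
    using assms by (simp add: exp_sum finite_all_edges sum_distrib_left mult.assoc)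
  ultimately show ?thesis
    by (simp only:)
qed

lemma bij_betw_with_ghost:
  assumes partition: "partition_on (ext_bd \<Lambda>) \<xi>"
  shows "bij_betw (\<lambda>\<sigma>. restrict (with_ghost \<sigma>) (verts \<Lambda>))
           {\<sigma> \<in> PiE (Lbar \<Lambda>) (\<lambda>_. {-1, 1}). \<forall>C\<in>\<xi>. \<forall>x\<in>C. \<forall>y\<in>C. \<sigma> x = \<sigma> y}
           {\<tau> \<in> {\<tau> \<in> PiE (verts \<Lambda>) (\<lambda>_. {-1, 1}). \<forall>(u, v)\<in>boundary_pairs \<xi>. \<tau> u = \<tau> v}.
              \<tau> None = 1}"
    (is "bij_betw ?extend ?S\<^sub>I ?S")
proof (rule bij_betwI[where g = "\<lambda>\<tau>. \<lambda>x\<in>Lbar \<Lambda>. \<tau> (Some x)"])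
  have classes_in_Lbar: "x \<in> Lbar \<Lambda>" if "C \<in> \<xi>" "x \<in> C" for C x
    using partition that by (auto simp: partition_on_def Lbar_def)
  then show "?extend \<in> ?S\<^sub>I \<rightarrow> ?S"
    by (fastforce simp: with_ghost_def boundary_pairs_def PiE_iff verts_def)
  show "(\<lambda>\<tau>. \<lambda>x\<in>Lbar \<Lambda>. \<tau> (Some x)) \<in> ?S \<rightarrow> ?S\<^sub>I"
  proof
    fix \<tau> assume "\<tau> \<in> ?S"
    then have \<tau>: "\<tau> \<in> PiE (verts \<Lambda>) (\<lambda>_. {-1, 1})"
      and constraint: "\<forall>(u, v)\<in>boundary_pairs \<xi>. \<tau> u = \<tau> v"
      by auto
    have "(\<lambda>x\<in>Lbar \<Lambda>. \<tau> (Some x)) \<in> PiE (Lbar \<Lambda>) (\<lambda>_. {-1, 1})"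
      using \<tau> by (simp add: PiE_iff)
    moreover have "(\<lambda>x\<in>Lbar \<Lambda>. \<tau> (Some x)) x = (\<lambda>x\<in>Lbar \<Lambda>. \<tau> (Some x)) y"
      if "C \<in> \<xi>" "x \<in> C" "y \<in> C" for x y C
    proof -
      have "(Some x, Some y) \<in> boundary_pairs \<xi>"
        using that by (auto simp: boundary_pairs_def)
      then show ?thesis
        using constraint classes_in_Lbar[OF that(1,2)] classes_in_Lbar[OF that(1,3)] by auto
    qed
    ultimately show "(\<lambda>x\<in>Lbar \<Lambda>. \<tau> (Some x)) \<in> ?S\<^sub>I"
      by blast
  qed
  show "(\<lambda>x\<in>Lbar \<Lambda>. ?extend \<sigma> (Some x)) = \<sigma>" if "\<sigma> \<in> ?S\<^sub>I" for \<sigma>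
    using that by (auto simp: with_ghost_def PiE_iff extensional_def)
  show "?extend (\<lambda>x\<in>Lbar \<Lambda>. \<tau> (Some x)) = \<tau>" if "\<tau> \<in> ?S" for \<tau>
    using that by (auto simp: with_ghost_def PiE_iff extensional_def verts_def split: option.split)
qed

lemma sum_vertex_spins_eq_Z_Ising:
  assumes "finite \<Lambda>" and partition: "partition_on (ext_bd \<Lambda>) \<xi>"
  shows "(\<Sum>\<tau>\<in>{\<tau> \<in> PiE (verts \<Lambda>) (\<lambda>_. {-1, 1}). \<forall>(u, v)\<in>boundary_pairs \<xi>. \<tau> u = \<tau> v}.
            \<Prod>e\<in>all_edges \<Lambda> h. exp (\<beta> * coupling h t e * (\<Prod>v\<in>e. \<tau> v)))
         = 2 * Z_Ising \<Lambda> \<xi> \<beta> h t"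
proof -
  define S where "S = {\<tau> \<in> PiE (verts \<Lambda>) (\<lambda>_. {-1, 1::real}). \<forall>(u, v)\<in>boundary_pairs \<xi>. \<tau> u = \<tau> v}"
  define G where "G \<tau> = (\<Prod>e\<in>all_edges \<Lambda> h. exp (\<beta> * coupling h t e * (\<Prod>v\<in>e. \<tau> v)))"
    for \<tau> :: "'a vtx \<Rightarrow> real"
  \<comment> \<open>a global spin flip leaves every edge term unchanged, so the ghost spin may be fixed to 1\<close>
  have "sum G S = 2 * sum G {\<tau> \<in> S. \<tau> None = 1}"
  proof (rule sum_sign_flip_invariant)
    show "(\<lambda>v\<in>verts \<Lambda>. - \<tau> v) \<in> S" if "\<tau> \<in> S" for \<tau>
      using that boundary_pairs_subset[OF partition] by (fastforce simp: S_def PiE_iff)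
    show "G (\<lambda>v\<in>verts \<Lambda>. - \<tau> v) = G \<tau>" for \<tau>
    proof -
      have "(\<Prod>v\<in>e. (\<lambda>v\<in>verts \<Lambda>. - \<tau> v) v) = (\<Prod>v\<in>e. \<tau> v)" if "e \<in> all_edges \<Lambda> h" for e
        using all_edges_doubletons[OF that] by auto
      then show ?thesis
        by (simp add: G_def)
    qed
  qed (auto simp: S_def finite_verts assms(1))
  also have "sum G {\<tau> \<in> S. \<tau> None = 1}
      = (\<Sum>\<sigma>\<in>{\<sigma> \<in> PiE (Lbar \<Lambda>) (\<lambda>_. {-1, 1}). \<forall>C\<in>\<xi>. \<forall>x\<in>C. \<forall>y\<in>C. \<sigma> x = \<sigma> y}.
           G (restrict (with_ghost \<sigma>) (verts \<Lambda>)))"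
    unfolding S_def by (rule sum.reindex_bij_betw[OF bij_betw_with_ghost[OF partition], symmetric])
  also have "\<dots> = Z_Ising \<Lambda> \<xi> \<beta> h t"
  proof -
    have "G (restrict (with_ghost \<sigma>) (verts \<Lambda>)) = G (with_ghost \<sigma>)" for \<sigma>
      unfolding G_def
      by (intro prod.cong refl arg_cong[where f = exp] arg_cong[where f = "\<lambda>x. _ * x"] prod.cong)
        (use all_edges_doubletons in fastforce)
    then show ?thesis
      by (simp add: Z_Ising_def G_def prod_edge_weights_with_ghost[OF assms(1)])
  qed
  finally show ?thesis
    by (simp add: S_def G_def)
qed

lemma Z_Ising_pos:
  assumes "finite \<Lambda>" and "partition_on (ext_bd \<Lambda>) \<xi>"
  shows "0 < Z_Ising \<Lambda> \<xi> \<beta> h t"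
proof -
  let ?S = "{\<sigma> \<in> PiE (Lbar \<Lambda>) (\<lambda>_. {-1, 1::real}). \<forall>C\<in>\<xi>. \<forall>x\<in>C. \<forall>y\<in>C. \<sigma> x = \<sigma> y}"
  have "C \<subseteq> Lbar \<Lambda>" if "C \<in> \<xi>" for C
    using assms(2) that by (auto simp: partition_on_def Lbar_def)
  then have "(\<lambda>x\<in>Lbar \<Lambda>. 1) \<in> ?S"
    by (auto simp: subset_iff)
  moreover have "finite ?S"
    using finite_PiE[OF finite_Lbar[OF assms(1)], of "\<lambda>_. {-1, 1::real}"]
    by (rule rev_finite_subset) auto
  ultimately show ?thesis
    unfolding Z_Ising_def by (intro sum_pos) (blast, blast, simp)
qed

lemma sum_fk_weight_eq_Z_Ising:
  assumes "finite \<Lambda>" and "partition_on (ext_bd \<Lambda>) \<xi>"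
  shows "(\<Prod>e\<in>all_edges \<Lambda> h. sqrt (1 - edge_p \<beta> h t e))
           * (\<Sum>\<omega>\<in>configs (all_edges \<Lambda> h). fk_weight \<Lambda> \<xi> \<beta> h t \<omega>)
         = 2 * Z_Ising \<Lambda> \<xi> \<beta> h t"
proof -
  have "(\<Prod>e\<in>all_edges \<Lambda> h. sqrt (1 - edge_p \<beta> h t e))
          * (\<Sum>\<omega>\<in>configs (all_edges \<Lambda> h). fk_weight \<Lambda> \<xi> \<beta> h t \<omega>)
      = (\<Sum>\<omega>\<in>PiE (all_edges \<Lambda> h) (\<lambda>_. UNIV).
           (\<Prod>e\<in>all_edges \<Lambda> h. sqrt (1 - edge_p \<beta> h t e)
              * (edge_p \<beta> h t e / (1 - edge_p \<beta> h t e)) ^ (if \<omega> e then 1 else 0))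
           * 2 ^ num_clusters \<Lambda> \<xi> (all_edges \<Lambda> h) \<omega>)"
    by (simp add: configs_def fk_weight_def sum_distrib_left prod.distrib mult.assoc)
  also have "\<dots> = (\<Sum>\<tau>\<in>{\<tau> \<in> PiE (verts \<Lambda>) (\<lambda>_. {-1, 1}). \<forall>(u, v)\<in>boundary_pairs \<xi>. \<tau> u = \<tau> v}.
                    \<Prod>e\<in>all_edges \<Lambda> h. exp (\<beta> * coupling h t e * (\<Prod>v\<in>e. \<tau> v)))"
    unfolding num_clusters_eq
    by (rule Edwards_Sokal_sum[OF finite_verts finite_all_edges all_edges_doubletons
          boundary_pairs_subset]) (use assms in \<open>simp_all add: edge_p_def\<close>)
  also have "\<dots> = 2 * Z_Ising \<Lambda> \<xi> \<beta> h t"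
    by (rule sum_vertex_spins_eq_Z_Ising[OF assms])
  finally show ?thesis .
qed

lemma psi_weight_eq_fk_weight:
  "psi_weight \<Lambda> \<xi> b \<beta> h (\<omega>, t)
     = bc_ind \<Lambda> b t * (\<Prod>e\<in>all_edges \<Lambda> h. sqrt (1 - edge_p \<beta> h t e)) * fk_weight \<Lambda> \<xi> \<beta> h t \<omega>"
  by (simp add: psi_weight_def fk_weight_def prod.distrib mult.assoc)

lemma sum_psi_weight:
  assumes "finite \<Lambda>" and "partition_on (ext_bd \<Lambda>) \<xi>"
  shows "(\<Sum>\<omega>\<in>configs (all_edges \<Lambda> h). psi_weight \<Lambda> \<xi> b \<beta> h (\<omega>, t))
           = 2 * bc_ind \<Lambda> b t * Z_Ising \<Lambda> \<xi> \<beta> h t"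
proof -
  have "(\<Sum>\<omega>\<in>configs (all_edges \<Lambda> h). psi_weight \<Lambda> \<xi> b \<beta> h (\<omega>, t))
      = bc_ind \<Lambda> b t * ((\<Prod>e\<in>all_edges \<Lambda> h. sqrt (1 - edge_p \<beta> h t e))
          * (\<Sum>\<omega>\<in>configs (all_edges \<Lambda> h). fk_weight \<Lambda> \<xi> \<beta> h t \<omega>))"
    by (simp add: psi_weight_eq_fk_weight sum_distrib_left mult.assoc)
  then show ?thesis
    by (simp add: sum_fk_weight_eq_Z_Ising[OF assms])
qed

lemma psi_weight_eq_phiFK:
  assumes "finite \<Lambda>" and "partition_on (ext_bd \<Lambda>) \<xi>"
  shows "psi_weight \<Lambda> \<xi> b \<beta> h (\<omega>, t)
           = 2 * bc_ind \<Lambda> b t * Z_Ising \<Lambda> \<xi> \<beta> h t * phiFK \<Lambda> \<xi> \<beta> h t \<omega>"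
proof -
  define P where "P = (\<Prod>e\<in>all_edges \<Lambda> h. sqrt (1 - edge_p \<beta> h t e))"
  define F where "F = (\<Sum>\<omega>\<in>configs (all_edges \<Lambda> h). fk_weight \<Lambda> \<xi> \<beta> h t \<omega>)"
  have PF: "P * F = 2 * Z_Ising \<Lambda> \<xi> \<beta> h t"
    unfolding P_def F_def by (rule sum_fk_weight_eq_Z_Ising[OF assms])
  then have "F \<noteq> 0"
    using Z_Ising_pos[OF assms, of \<beta> h t] by auto
  have "psi_weight \<Lambda> \<xi> b \<beta> h (\<omega>, t) = bc_ind \<Lambda> b t * P * fk_weight \<Lambda> \<xi> \<beta> h t \<omega>"
    by (simp add: psi_weight_eq_fk_weight P_def)
  also have "\<dots> = bc_ind \<Lambda> b t * (P * F) * (fk_weight \<Lambda> \<xi> \<beta> h t \<omega> / F)"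
    using \<open>F \<noteq> 0\<close> by simp
  also have "\<dots> = 2 * bc_ind \<Lambda> b t * Z_Ising \<Lambda> \<xi> \<beta> h t * phiFK \<Lambda> \<xi> \<beta> h t \<omega>"
    unfolding PF phiFK_def F_def[symmetric] by simp
  finally show ?thesis .
qed

section \<open>Single-site measures\<close>

lemma integrable_exp_quartic:
  fixes g D :: real
  assumes "g > 0"
  shows "integrable lborel (\<lambda>t. exp (- g * t ^ 4 + D * t ^ 2))"
proof (rule Bochner_Integration.integrable_bound)
  define K where "K = (D + 1/2)\<^sup>2 / (4 * g)"
  show "integrable lborel (\<lambda>t. (exp K * sqrt (2 * pi)) * std_normal_density t)"
    by (rule integrable_mult_right) simp
  show "AE t in lborel. norm (exp (- g * t ^ 4 + D * t ^ 2))
          \<le> norm ((exp K * sqrt (2 * pi)) * std_normal_density t)"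
  proof (rule AE_I2)
    fix t :: real
    \<comment> \<open>complete the square: \<open>(D + 1/2) u - g u\<^sup>2 \<le> K\<close> with \<open>u = t\<^sup>2\<close>\<close>
    have "0 \<le> (2 * g * t\<^sup>2 - (D + 1/2))\<^sup>2"
      by simp
    then have "(D + 1/2) * t\<^sup>2 - g * (t\<^sup>2)\<^sup>2 \<le> K"
      using assms by (simp add: K_def field_simps power2_eq_square)
    then have "exp (- g * t ^ 4 + D * t ^ 2) \<le> exp K * exp (- t\<^sup>2 / 2)"
      by (simp add: power2_eq_square power4_eq_xxxx algebra_simps flip: exp_add)
    then show "norm (exp (- g * t ^ 4 + D * t ^ 2))
          \<le> norm ((exp K * sqrt (2 * pi)) * std_normal_density t)"
      by (simp add: std_normal_density_def)
  qed
qed measurable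

lemma borel_measurable_phi4_density [measurable]: "phi4_density g a \<in> borel_measurable borel"
  unfolding phi4_density_def[abs_def] by measurable

lemma integrable_phi4_density: "g > 0 \<Longrightarrow> integrable lborel (phi4_density g a)"
  using integrable_exp_quartic[of g "- a"] by (simp add: phi4_density_def[abs_def])

lemma phi4_density_pos: "0 < phi4_density g a t"
  by (simp add: phi4_density_def)

lemma phi4_density_integral_pos:
  assumes "g > 0"
  shows "0 < (\<integral>s. phi4_density g a s \<partial>lborel)"
proof -
  have "\<not> (AE s in lborel. phi4_density g a s = 0)"
  proof
    assume "AE s in lborel. phi4_density g a s = 0"
    then have "AE s::real in lborel. False"
      by (simp add: phi4_density_def)
    then show False
      using ae_filter_eq_bot_iff[of "lborel :: real measure"] by (simp add: eventually_False)
  qed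
  then have "(\<integral>s. phi4_density g a s \<partial>lborel) \<noteq> 0"
    using integrable_phi4_density[OF assms] phi4_density_pos[of g a]
    by (subst integral_nonneg_eq_0_iff_AE) (auto intro: less_imp_le)
  moreover have "0 \<le> (\<integral>s. phi4_density g a s \<partial>lborel)"
    by (intro integral_nonneg_AE AE_I2 less_imp_le phi4_density_pos)
  ultimately show ?thesis
    by simp
qed

lemma sets_rho [simp, measurable_cong]: "sets (rho g a) = sets borel"
  by (simp add: rho_def)

lemma sets_rho_tilde [simp, measurable_cong]: "sets (rho_tilde g a) = sets borel"
  by (simp add: rho_tilde_def)

lemma space_rho_tilde [simp]: "space (rho_tilde g a) = UNIV"
  by (simp add: rho_tilde_def)

lemma prob_space_rho:
  assumes "g > 0"
  shows "prob_space (rho g a)"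
proof (rule prob_spaceI)
  let ?N = "\<integral>s. phi4_density g a s \<partial>lborel"
  have "emeasure (rho g a) (space (rho g a)) = (\<integral>\<^sup>+ t. ennreal (phi4_density g a t / ?N) \<partial>lborel)"
    by (simp add: rho_def emeasure_density)
  also have "\<dots> = ennreal (\<integral>t. phi4_density g a t / ?N \<partial>lborel)"
  proof (rule nn_integral_eq_integral)
    show "integrable lborel (\<lambda>t. phi4_density g a t / ?N)"
      using integrable_phi4_density[OF assms] by (rule integrable_divide_zero)
    show "AE t in lborel. 0 \<le> phi4_density g a t / ?N"
      using phi4_density_integral_pos[OF assms, of a] phi4_density_pos[of g a]
      by (simp add: less_imp_le)
  qed
  also have "\<dots> = 1"
    using phi4_density_integral_pos[OF assms, of a] by simp
  finally show "emeasure (rho g a) (space (rho g a)) = 1" .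
qed

lemma prob_space_rho_tilde: "g > 0 \<Longrightarrow> prob_space (rho_tilde g a)"
  unfolding rho_tilde_def by (rule prob_space.prob_space_distr[OF prob_space_rho]) auto

lemma distr_rho_uminus: "distr (rho g a) borel uminus = rho g a"
proof -
  let ?f = "\<lambda>t. ennreal (phi4_density g a t / (\<integral>s. phi4_density g a s \<partial>lborel))"
  have "?f \<circ> uminus = ?f"
    by (simp add: phi4_density_def fun_eq_iff)
  then have "distr (density lborel (\<lambda>t. ?f (- t))) borel uminus = density lborel ?f"
    using density_distr[of ?f borel uminus lborel] by (simp add: comp_def lborel_distr_uminus)
  then show ?thesis
    by (simp add: rho_def comp_def phi4_density_def)
qed

lemma AE_rho_tilde_nonneg: "AE y in rho_tilde g a. 0 \<le> y"
  unfolding rho_tilde_def by (subst AE_distr_iff) auto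

lemma measurable_PiM_component_borel:
  assumes "\<And>i. i \<in> I \<Longrightarrow> sets (M i) = sets (borel :: real measure)"
  shows "(\<lambda>t. t x) \<in> borel_measurable (PiM I M)"
proof (cases "x \<in> I")
  case True
  then have "(\<lambda>t. t x) \<in> measurable (PiM I M) (M x)"
    by (rule measurable_component_singleton)
  then show ?thesis
    using assms True by (simp cong: measurable_cong_sets)
next
  case False
  then have "(\<lambda>t. t x) \<in> borel_measurable (PiM I M) \<longleftrightarrow> (\<lambda>t. undefined :: real) \<in> borel_measurable (PiM I M)"
    by (intro measurable_cong) (auto simp: space_PiM PiE_def extensional_def)
  then show ?thesis
    by simp
qed

definition A_site :: "real \<Rightarrow> real \<Rightarrow> 'd::finite site set \<Rightarrow> ('d site \<Rightarrow> real) \<Rightarrow> 'd site \<Rightarrow> real measure"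
  where "A_site g a \<Lambda> b x = (if x \<in> \<Lambda> then rho_tilde g a else return borel (b x))"

lemma A_base_eq_PiM_A_site: "A_base g a \<Lambda> b = PiM (Lbar \<Lambda>) (A_site g a \<Lambda> b)"
  by (simp add: A_base_def A_site_def[abs_def])

lemma sets_A_site [simp]: "sets (A_site g a \<Lambda> b x) = sets borel"
  by (simp add: A_site_def)

lemma prob_space_A_site: "g > 0 \<Longrightarrow> prob_space (A_site g a \<Lambda> b x)"
  by (simp add: A_site_def prob_space_rho_tilde prob_space_return)

lemma prob_space_A_base: "g > 0 \<Longrightarrow> prob_space (A_base g a \<Lambda> b)"
  unfolding A_base_eq_PiM_A_site by (intro prob_space_PiM prob_space_A_site)

lemma measurable_A_base_component [measurable]:
  "(\<lambda>t. t x) \<in> borel_measurable (A_base g a \<Lambda> b)"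
  unfolding A_base_eq_PiM_A_site by (rule measurable_PiM_component_borel) simp

lemma AE_A_base_site:
  assumes "g > 0" and "x \<in> Lbar \<Lambda>" and "AE y in A_site g a \<Lambda> b x. P y"
  shows "AE t in A_base g a \<Lambda> b. P (t x)"
  unfolding A_base_eq_PiM_A_site using prob_space_A_site[OF assms(1)] assms(2,3)
  by (rule AE_PiM_component)

lemma AE_A_base_nonneg:
  assumes "g > 0" and "finite \<Lambda>" and "\<forall>x\<in>ext_bd \<Lambda>. b x \<ge> 0"
  shows "AE t in A_base g a \<Lambda> b. \<forall>x\<in>Lbar \<Lambda>. 0 \<le> t x"
proof (rule AE_finite_allI[OF finite_Lbar[OF assms(2)]])
  fix x assume x: "x \<in> Lbar \<Lambda>"
  have "AE y in A_site g a \<Lambda> b x. 0 \<le> y"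
    using x assms(3) unfolding A_site_def by (auto simp: AE_rho_tilde_nonneg AE_return Lbar_def)
  then show "AE t in A_base g a \<Lambda> b. 0 \<le> t x"
    by (rule AE_A_base_site[OF assms(1) x])
qed

lemma AE_A_base_boundary:
  assumes "g > 0" and "finite \<Lambda>"
  shows "AE t in A_base g a \<Lambda> b. \<forall>x\<in>ext_bd \<Lambda>. t x = b x"
proof (rule AE_finite_allI[OF finite_ext_bd[OF assms(2)]])
  fix x assume "x \<in> ext_bd \<Lambda>"
  then have x: "x \<in> Lbar \<Lambda>" "x \<notin> \<Lambda>"
    by (auto simp: Lbar_def ext_bd_def)
  then have "AE y in A_site g a \<Lambda> b x. y = b x"
    unfolding A_site_def by (simp add: AE_return)
  then show "AE t in A_base g a \<Lambda> b. t x = b x"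
    by (rule AE_A_base_site[OF assms(1) x(1)])
qed

lemma bc_ind_eq_prod:
  "finite \<Lambda> \<Longrightarrow> bc_ind \<Lambda> b t = (\<Prod>x\<in>ext_bd \<Lambda>. of_bool (t x = b x))"
  by (simp add: bc_ind_def prod_of_bool finite_ext_bd)

lemma borel_measurable_bc_ind [measurable]:
  "finite \<Lambda> \<Longrightarrow> (\<lambda>t. bc_ind \<Lambda> b t) \<in> borel_measurable (A_base g a \<Lambda>' b')"
  unfolding bc_ind_eq_prod by measurable

lemma borel_measurable_coupling [measurable]:
  "(\<lambda>t. coupling h t e) \<in> borel_measurable (A_base g a \<Lambda> b)"
  unfolding coupling_def by measurable

lemma borel_measurable_edge_p [measurable]:
  "(\<lambda>t. edge_p \<beta> h t e) \<in> borel_measurable (A_base g a \<Lambda> b)"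
  unfolding edge_p_def by measurable

lemma borel_measurable_psi_weight [measurable]:
  "finite \<Lambda> \<Longrightarrow> (\<lambda>t. psi_weight \<Lambda> \<xi> b \<beta> h (\<omega>, t)) \<in> borel_measurable (A_base g a \<Lambda> b)"
  unfolding psi_weight_def by simp measurable

lemma borel_measurable_Z_Ising [measurable]:
  "(\<lambda>t. Z_Ising \<Lambda> \<xi> \<beta> h t) \<in> borel_measurable (A_base g a \<Lambda>' b)"
  unfolding Z_Ising_def by measurable

lemma borel_measurable_phiFK [measurable]:
  "(\<lambda>t. phiFK \<Lambda> \<xi> \<beta> h t \<omega>) \<in> borel_measurable (A_base g a \<Lambda>' b)"
  unfolding phiFK_def fk_weight_def by measurable

lemma coupling_nonneg:
  assumes "e \<in> all_edges \<Lambda> h" and "\<forall>x\<in>Lbar \<Lambda>. 0 \<le> t x" and "\<forall>x\<in>\<Lambda>. 0 \<le> h x"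
  shows "0 \<le> coupling h t e"
  using assms(1)
proof (cases rule: all_edges_cases)
  case (bar x y)
  then have "{z. Some z \<in> e} \<subseteq> Lbar \<Lambda>"
    using adj_in_Lbar by (auto simp: Lbar_def)
  then show ?thesis
    using bar assms(2) by (auto simp: coupling_def intro!: prod_nonneg)
next
  case (ghost x)
  then have "{z. Some z \<in> e} = {x}" and "x \<in> Lbar \<Lambda>"
    by (auto simp: Lbar_def)
  then show ?thesis
    using ghost assms(2,3) by (simp add: coupling_def)
qed

lemma psi_weight_nonneg:
  assumes "\<forall>x\<in>Lbar \<Lambda>. 0 \<le> t x" and "\<forall>x\<in>\<Lambda>. 0 \<le> h x" and "0 \<le> \<beta>"
  shows "0 \<le> psi_weight \<Lambda> \<xi> b \<beta> h (\<omega>, t)"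
proof -
  have "0 \<le> sqrt (1 - edge_p \<beta> h t e) * (edge_p \<beta> h t e / (1 - edge_p \<beta> h t e)) ^ k"
    if "e \<in> all_edges \<Lambda> h" for e k
  proof -
    have "0 \<le> edge_p \<beta> h t e" "edge_p \<beta> h t e < 1"
      using coupling_nonneg[OF that assms(1,2)] assms(3) by (simp_all add: edge_p_def)
    then show ?thesis
      by simp
  qed
  then have "0 \<le> (\<Prod>e\<in>all_edges \<Lambda> h. sqrt (1 - edge_p \<beta> h t e)
                 * (edge_p \<beta> h t e / (1 - edge_p \<beta> h t e)) ^ (if \<omega> e then 1 else 0))"
    by (intro prod_nonneg) blast
  then show ?thesis
    unfolding psi_weight_def by (simp add: bc_ind_def)
qed

section \<open>The a-marginal and the conditional law of the bonds\<close>

locale phi4_coupling =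
  fixes g a :: real and \<Lambda> :: "'d::finite site set" and \<xi> :: "'d site set set"
    and b h :: "'d site \<Rightarrow> real" and \<beta> :: real
  assumes g_pos: "g > 0" and finite_\<Lambda>: "finite \<Lambda>" and partition: "partition_on (ext_bd \<Lambda>) \<xi>"
    and b_nonneg: "\<forall>x\<in>ext_bd \<Lambda>. b x \<ge> 0" and h_nonneg: "\<forall>x\<in>\<Lambda>. h x \<ge> 0"
    and \<beta>_nonneg: "\<beta> \<ge> 0"
begin

abbreviation "\<Omega> \<equiv> configs (all_edges \<Lambda> h)"
abbreviation "A \<equiv> A_base g a \<Lambda> b"
abbreviation "J \<equiv> joint_base g a \<Lambda> b h"
abbreviation "\<psi> \<equiv> psi_weight \<Lambda> \<xi> b \<beta> h"
abbreviation "Z \<equiv> Z_Psi g a \<Lambda> \<xi> b \<beta> h"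

sublocale A: prob_space A
  by (rule prob_space_A_base[OF g_pos])

lemma finite_configs: "finite \<Omega>"
  unfolding configs_def by (intro finite_PiE finite_all_edges finite_\<Lambda>) auto

lemma borel_measurable_psi_weight_joint [measurable]: "\<psi> \<in> borel_measurable J"
  unfolding joint_base_def
  by (rule measurable_pair_measure_countable1[OF countable_finite[OF finite_configs]])
     (rule borel_measurable_psi_weight[OF finite_\<Lambda>])

lemma nn_integral_joint_base:
  assumes "F \<in> borel_measurable J"
  shows "(\<integral>\<^sup>+ z. F z \<partial>J) = (\<Sum>\<omega>\<in>\<Omega>. \<integral>\<^sup>+ t. F (\<omega>, t) \<partial>A)"
proof -
  have "(\<integral>\<^sup>+ z. F z \<partial>J) = (\<integral>\<^sup>+ \<omega>. \<integral>\<^sup>+ t. F (\<omega>, t) \<partial>A \<partial>count_space \<Omega>)"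
    using assms unfolding joint_base_def by (rule A.nn_integral_fst[symmetric])
  also have "\<dots> = (\<Sum>\<omega>\<in>\<Omega>. \<integral>\<^sup>+ t. F (\<omega>, t) \<partial>A)"
    by (rule nn_integral_count_space_finite[OF finite_configs])
  finally show ?thesis .
qed

lemma AE_joint_base:
  assumes "AE t in A. P t"
  shows "AE z in J. P (snd z)"
proof -
  from assms obtain N where N: "{t \<in> space A. \<not> P t} \<subseteq> N" "N \<in> null_sets A"
    by (auto elim!: AE_E)
  then have "\<Omega> \<times> N \<in> null_sets J"
    unfolding joint_base_def by (auto simp: A.emeasure_pair_measure_Times)
  moreover have "{z \<in> space J. \<not> P (snd z)} \<subseteq> \<Omega> \<times> N"
    using N unfolding joint_base_def by (auto simp: space_pair_measure)
  ultimately show ?thesis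
    by (rule AE_I')
qed

lemma AE_psi_weight_nonneg: "AE t in A. \<forall>\<omega>. 0 \<le> \<psi> (\<omega>, t)"
  using AE_A_base_nonneg[OF g_pos finite_\<Lambda> b_nonneg]
  by eventually_elim (use psi_weight_nonneg h_nonneg \<beta>_nonneg in auto)

lemma Z_Psi_nonneg: "0 \<le> Z"
proof -
  have "AE z in J. 0 \<le> \<psi> z"
    using AE_joint_base[OF AE_psi_weight_nonneg] by eventually_elim auto
  then show ?thesis
    unfolding Z_Psi_def by (rule integral_nonneg_AE)
qed

abbreviation "\<Psi> \<equiv> Psi g a \<Lambda> \<xi> b \<beta> h"
abbreviation "\<mu> \<equiv> mu g a \<Lambda> \<xi> b \<beta> h"

lemma sets_Psi [measurable_cong]: "sets \<Psi> = sets J"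
  by (simp add: Psi_def)

lemma measurable_snd_Psi: "snd \<in> measurable \<Psi> A"
  unfolding measurable_cong_sets[OF sets_Psi refl] joint_base_def by (rule measurable_snd)

lemma emeasure_Psi:
  assumes "X \<in> sets J"
  shows "emeasure \<Psi> X = (\<Sum>\<omega>\<in>\<Omega>. \<integral>\<^sup>+ t. ennreal (\<psi> (\<omega>, t) / Z) * indicator X (\<omega>, t) \<partial>A)"
  unfolding Psi_def using assms
  by (simp add: emeasure_density nn_integral_joint_base)

lemma sum_psi_weight_div_Z:
  "AE t in A. (\<Sum>\<omega>\<in>\<Omega>. ennreal (\<psi> (\<omega>, t) / Z))
                = ennreal (2 * bc_ind \<Lambda> b t * Z_Ising \<Lambda> \<xi> \<beta> h t / Z)"
  using AE_psi_weight_nonneg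
proof eventually_elim
  case (elim t)
  then have "(\<Sum>\<omega>\<in>\<Omega>. ennreal (\<psi> (\<omega>, t) / Z)) = ennreal (\<Sum>\<omega>\<in>\<Omega>. \<psi> (\<omega>, t) / Z)"
    using Z_Psi_nonneg by (intro sum_ennreal) auto
  also have "\<dots> = ennreal (2 * bc_ind \<Lambda> b t * Z_Ising \<Lambda> \<xi> \<beta> h t / Z)"
    by (simp add: sum_divide_distrib[symmetric] sum_psi_weight[OF finite_\<Lambda> partition])
  finally show ?case .
qed

lemma mu_eq_density:
  "\<mu> = density A (\<lambda>t. ennreal (2 * bc_ind \<Lambda> b t * Z_Ising \<Lambda> \<xi> \<beta> h t / Z))"
  (is "_ = density A ?f")
proof (rule measure_eqI)
  fix B assume "B \<in> sets \<mu>"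
  then have B [measurable]: "B \<in> sets A"
    by (simp add: mu_def)
  have "emeasure \<mu> B = emeasure \<Psi> (snd -` B \<inter> space \<Psi>)"
    unfolding mu_def by (rule emeasure_distr[OF measurable_snd_Psi B])
  also have "\<dots> = (\<Sum>\<omega>\<in>\<Omega>. \<integral>\<^sup>+ t. ennreal (\<psi> (\<omega>, t) / Z) * indicator B t \<partial>A)"
  proof -
    have "snd -` B \<inter> space \<Psi> \<in> sets J"
      using measurable_sets[OF measurable_snd_Psi B] by (simp add: sets_Psi)
    then show ?thesis
      by (simp add: emeasure_Psi)
         (auto simp: Psi_def joint_base_def space_pair_measure indicator_def
           intro!: sum.cong nn_integral_cong)
  qed
  also have "\<dots> = (\<integral>\<^sup>+ t. (\<Sum>\<omega>\<in>\<Omega>. ennreal (\<psi> (\<omega>, t) / Z)) * indicator B t \<partial>A)"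
    using finite_\<Lambda> by (simp add: nn_integral_sum sum_distrib_right)
  also have "\<dots> = (\<integral>\<^sup>+ t. ennreal (2 * bc_ind \<Lambda> b t * Z_Ising \<Lambda> \<xi> \<beta> h t / Z) * indicator B t \<partial>A)"
    using sum_psi_weight_div_Z by (intro nn_integral_cong_AE) auto
  also have "\<dots> = emeasure (density A ?f) B"
    using finite_\<Lambda> by (simp add: emeasure_density)
  finally show "emeasure \<mu> B = emeasure (density A ?f) B" .
qed (simp add: mu_def)

lemma emeasure_Psi_singleton_Times:
  assumes "\<omega> \<in> \<Omega>" and B [measurable]: "B \<in> sets A"
  shows "emeasure \<Psi> ({\<omega>} \<times> B) = (\<integral>\<^sup>+ t\<in>B. ennreal (phiFK \<Lambda> \<xi> \<beta> h t \<omega>) \<partial>\<mu>)"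
proof -
  let ?f = "\<lambda>t. ennreal (2 * bc_ind \<Lambda> b t * Z_Ising \<Lambda> \<xi> \<beta> h t / Z)"
  have "emeasure \<Psi> ({\<omega>} \<times> B)
      = (\<Sum>\<omega>'\<in>\<Omega>. \<integral>\<^sup>+ t. ennreal (\<psi> (\<omega>', t) / Z) * indicator ({\<omega>} \<times> B) (\<omega>', t) \<partial>A)"
    by (rule emeasure_Psi) (use assms in \<open>simp add: joint_base_def\<close>)
  also have "\<dots> = (\<Sum>\<omega>'\<in>\<Omega>. if \<omega>' = \<omega> then \<integral>\<^sup>+ t. ennreal (\<psi> (\<omega>, t) / Z) * indicator B t \<partial>A else 0)"
    by (intro sum.cong refl) (auto simp: indicator_def)
  also have "\<dots> = (\<integral>\<^sup>+ t. ennreal (\<psi> (\<omega>, t) / Z) * indicator B t \<partial>A)"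
    using assms(1) finite_configs by simp
  also have "\<dots> = (\<integral>\<^sup>+ t. ?f t * (ennreal (phiFK \<Lambda> \<xi> \<beta> h t \<omega>) * indicator B t) \<partial>A)"
  proof (rule nn_integral_cong)
    fix t
    have "0 \<le> 2 * bc_ind \<Lambda> b t * Z_Ising \<Lambda> \<xi> \<beta> h t / Z"
      using Z_Psi_nonneg Z_Ising_pos[OF finite_\<Lambda> partition, of \<beta> h t] by (simp add: bc_ind_def)
    moreover have "\<psi> (\<omega>, t) / Z = 2 * bc_ind \<Lambda> b t * Z_Ising \<Lambda> \<xi> \<beta> h t / Z * phiFK \<Lambda> \<xi> \<beta> h t \<omega>"
      by (simp add: psi_weight_eq_phiFK[OF finite_\<Lambda> partition])
    ultimately have "ennreal (\<psi> (\<omega>, t) / Z) = ?f t * ennreal (phiFK \<Lambda> \<xi> \<beta> h t \<omega>)"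
      by (simp only: ennreal_mult')
    then show "ennreal (\<psi> (\<omega>, t) / Z) * indicator B t = ?f t * (ennreal (phiFK \<Lambda> \<xi> \<beta> h t \<omega>) * indicator B t)"
      by (simp add: mult.assoc)
  qed
  also have "\<dots> = (\<integral>\<^sup>+ t\<in>B. ennreal (phiFK \<Lambda> \<xi> \<beta> h t \<omega>) \<partial>\<mu>)"
    unfolding mu_eq_density using finite_\<Lambda> by (subst nn_integral_density) auto
  finally show ?thesis .
qed

end

section \<open>Free boundary condition\<close>

lemma bij_betw_merge_PiE:
  assumes "I \<inter> J = {}"
  shows "bij_betw (merge I J) (PiE I B \<times> PiE J B) (PiE (I \<union> J) B)"
proof (rule bij_betwI[where g = "\<lambda>\<sigma>. (restrict \<sigma> I, restrict \<sigma> J)"])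
  show "merge I J \<in> PiE I B \<times> PiE J B \<rightarrow> PiE (I \<union> J) B"
    using assms by (auto simp: PiE_iff)
  show "(\<lambda>\<sigma>. (restrict \<sigma> I, restrict \<sigma> J)) \<in> PiE (I \<union> J) B \<rightarrow> PiE I B \<times> PiE J B"
    by auto
  show "(restrict (merge I J p) I, restrict (merge I J p) J) = p" if "p \<in> PiE I B \<times> PiE J B" for p
    using that assms by (auto simp: restrict_PiE)
  show "merge I J (restrict \<sigma> I, restrict \<sigma> J) = \<sigma>" if "\<sigma> \<in> PiE (I \<union> J) B" for \<sigma>
    using that by (simp add: restrict_PiE)
qed

lemma sum_PiE_union_restrict:
  assumes "I \<inter> J = {}"
  shows "(\<Sum>\<sigma>\<in>PiE (I \<union> J) B. f (restrict \<sigma> I)) = of_nat (card (PiE J B)) * (\<Sum>x\<in>PiE I B. f x)"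
proof -
  have "(\<Sum>\<sigma>\<in>PiE (I \<union> J) B. f (restrict \<sigma> I)) = (\<Sum>p\<in>PiE I B \<times> PiE J B. f (restrict (merge I J p) I))"
    by (rule sum.reindex_bij_betw[OF bij_betw_merge_PiE[OF assms], symmetric])
  also have "\<dots> = (\<Sum>x\<in>PiE I B. \<Sum>y\<in>PiE J B. f x)"
    unfolding sum.cartesian_product'
    using assms by (intro sum.cong refl) (simp add: restrict_PiE)
  finally show ?thesis
    by (simp add: sum_distrib_left mult.commute)
qed

(* the total weight of the 2^|I| fields with absolute values s, for s \<ge> 0 *)
definition sign_sum :: "'i set \<Rightarrow> (('i \<Rightarrow> real) \<Rightarrow> real) \<Rightarrow> ('i \<Rightarrow> real) \<Rightarrow> real" where
  "sign_sum I W s = (\<Sum>\<tau>\<in>PiE I (\<lambda>_. {-1, 1}). W (\<lambda>x\<in>I. \<tau> x * s x))"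

lemma Ising_weight_free:
  assumes "finite \<Lambda>" and "\<forall>y\<in>ext_bd \<Lambda>. t y = 0"
  shows "exp (\<beta> * (\<Sum>e\<in>bar_edges \<Lambda>. \<Prod>x\<in>{x. Some x \<in> e}. t x * \<sigma> x)
             + \<beta> * (\<Sum>x\<in>\<Lambda>. h x * t x * \<sigma> x))
       = nu_weight \<Lambda> \<beta> h (\<lambda>x\<in>\<Lambda>. \<sigma> x * t x)"
proof -
  have "(\<Prod>x\<in>{x. Some x \<in> e}. t x * \<sigma> x) = 0" if outer: "e \<in> bar_edges \<Lambda> - inner_edges \<Lambda>" for e
  proof -
    obtain x y where e: "e = {Some x, Some y}" "x \<in> \<Lambda>" "adj x y"
      using outer by (auto simp: bar_edges_def)
    moreover have "y \<notin> \<Lambda>"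
      using outer e by (auto simp: inner_edges_def)
    ultimately have "y \<in> ext_bd \<Lambda>"
      by (auto simp: ext_bd_def)
    moreover have "{z. Some z \<in> e} = {x, y}"
      using e by auto
    ultimately show ?thesis
      using assms(2) by auto
  qed
  moreover have "inner_edges \<Lambda> \<subseteq> bar_edges \<Lambda>"
    by (auto simp: inner_edges_def bar_edges_def)
  ultimately have "(\<Sum>e\<in>bar_edges \<Lambda>. \<Prod>x\<in>{x. Some x \<in> e}. t x * \<sigma> x)
      = (\<Sum>e\<in>inner_edges \<Lambda>. \<Prod>x\<in>{x. Some x \<in> e}. t x * \<sigma> x)"
    by (intro sum.mono_neutral_right finite_bar_edges assms(1)) auto
  also have "\<dots> = (\<Sum>e\<in>inner_edges \<Lambda>. \<Prod>x\<in>{x. Some x \<in> e}. (\<lambda>x\<in>\<Lambda>. \<sigma> x * t x) x)"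
    by (intro sum.cong prod.cong refl) (auto simp: inner_edges_def)
  finally show ?thesis
    by (simp add: nu_weight_def mult_ac)
qed

lemma Z_Ising_free:
  assumes "finite \<Lambda>" and "\<forall>y\<in>ext_bd \<Lambda>. t y = 0"
  shows "Z_Ising \<Lambda> (free_xi \<Lambda>) \<beta> h t = 2 ^ card (ext_bd \<Lambda>) * sign_sum \<Lambda> (nu_weight \<Lambda> \<beta> h) (restrict t \<Lambda>)"
proof -
  define F where "F \<tau> = nu_weight \<Lambda> \<beta> h (\<lambda>x\<in>\<Lambda>. \<tau> x * t x)" for \<tau>
  have "\<Lambda> \<inter> ext_bd \<Lambda> = {}"
    by (auto simp: ext_bd_def)
  have "Z_Ising \<Lambda> (free_xi \<Lambda>) \<beta> h t = (\<Sum>\<sigma>\<in>PiE (\<Lambda> \<union> ext_bd \<Lambda>) (\<lambda>_. {-1, 1}). F (restrict \<sigma> \<Lambda>))"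
    unfolding Z_Ising_def Ising_weight_free[OF assms] F_def
    by (intro sum.cong arg_cong[where f = "nu_weight \<Lambda> \<beta> h"]) (auto simp: free_xi_def Lbar_def)
  also have "\<dots> = 2 ^ card (ext_bd \<Lambda>) * (\<Sum>\<tau>\<in>PiE \<Lambda> (\<lambda>_. {-1, 1}). F \<tau>)"
    using finite_ext_bd[OF assms(1)]
    by (simp add: sum_PiE_union_restrict[OF \<open>\<Lambda> \<inter> ext_bd \<Lambda> = {}\<close>] card_PiE)
  also have "(\<Sum>\<tau>\<in>PiE \<Lambda> (\<lambda>_. {-1, 1}). F \<tau>) = sign_sum \<Lambda> (nu_weight \<Lambda> \<beta> h) (restrict t \<Lambda>)"
    by (simp add: sign_sum_def F_def restrict_def cong: if_cong)
  finally show ?thesis .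
qed

lemma sign_sum_abs:
  "sign_sum I W (\<lambda>x\<in>I. \<bar>\<phi> x\<bar>) = (\<Sum>\<tau>\<in>PiE I (\<lambda>_. {-1, 1}). W (\<lambda>x\<in>I. \<tau> x * \<phi> x))"
proof -
  define sgn\<phi> where "sgn\<phi> x = (if \<phi> x < 0 then -1 else 1 :: real)" for x
  define flip where "flip \<tau> = (\<lambda>x\<in>I. \<tau> x * sgn\<phi> x)" for \<tau> :: "'a \<Rightarrow> real"
  have flip_PiE: "flip \<tau> \<in> PiE I (\<lambda>_. {-1, 1})" if "\<tau> \<in> PiE I (\<lambda>_. {-1, 1})" for \<tau>
    using that by (force simp: flip_def sgn\<phi>_def PiE_iff)
  have flip_flip: "flip (flip \<tau>) = \<tau>" if "\<tau> \<in> PiE I (\<lambda>_. {-1, 1})" for \<tau>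
    using that by (auto simp: flip_def sgn\<phi>_def PiE_iff extensional_def fun_eq_iff)
  have "bij_betw flip (PiE I (\<lambda>_. {-1, 1})) (PiE I (\<lambda>_. {-1, 1}))"
    using flip_PiE flip_flip by (intro bij_betwI[where g = flip]) auto
  then have "(\<Sum>\<tau>\<in>PiE I (\<lambda>_. {-1, 1}). W (\<lambda>x\<in>I. \<tau> x * \<phi> x))
      = (\<Sum>\<tau>\<in>PiE I (\<lambda>_. {-1, 1}). W (\<lambda>x\<in>I. flip \<tau> x * \<phi> x))"
    by (rule sum.reindex_bij_betw[symmetric])
  also have "\<dots> = sign_sum I W (\<lambda>x\<in>I. \<bar>\<phi> x\<bar>)"
  proof -
    have "(\<lambda>x\<in>I. flip \<tau> x * \<phi> x) = (\<lambda>x\<in>I. \<tau> x * (\<lambda>x\<in>I. \<bar>\<phi> x\<bar>) x)" for \<tau>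
      by (auto simp: flip_def sgn\<phi>_def abs_if fun_eq_iff)
    then show ?thesis
      by (simp add: sign_sum_def)
  qed
  finally show ?thesis ..
qed

lemma distr_PiM_componentwise:
  assumes "finite I"
    and M: "\<And>i. i \<in> I \<Longrightarrow> prob_space (M i)"
    and f [measurable]: "\<And>i. i \<in> I \<Longrightarrow> f i \<in> measurable (M i) (N i)"
  shows "distr (PiM I M) (PiM I N) (\<lambda>x. \<lambda>i\<in>I. f i (x i)) = PiM I (\<lambda>i. distr (M i) (N i) (f i))"
proof -
  define M' where "M' i = (if i \<in> I then M i else return (count_space UNIV) undefined)" for i
  define N' where "N' i = (if i \<in> I then distr (M i) (N i) (f i) else return (count_space UNIV) undefined)"
    for i
  interpret M': product_prob_space M'
    by (intro product_prob_spaceI) (auto simp: M'_def M prob_space_return)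
  interpret N': product_prob_space N'
    by (intro product_prob_spaceI)
       (auto simp: N'_def prob_space_return intro!: prob_space.prob_space_distr M f)
  have PiM_M': "PiM I M = PiM I M'"
    by (intro PiM_cong) (auto simp: M'_def)
  have "distr (PiM I M) (PiM I N) (\<lambda>x. \<lambda>i\<in>I. f i (x i)) = PiM I N'"
  proof (rule N'.PiM_eqI[OF assms(1)])
    show "sets (distr (PiM I M) (PiM I N) (\<lambda>x. \<lambda>i\<in>I. f i (x i))) = sets (PiM I N')"
      by (simp add: N'_def cong: sets_PiM_cong)
    fix A assume A: "\<And>i. i \<in> I \<Longrightarrow> A i \<in> sets (N' i)"
    then have A_N: "A i \<in> sets (N i)" if "i \<in> I" for i
      using that by (simp add: N'_def)
    have "emeasure (distr (PiM I M) (PiM I N) (\<lambda>x. \<lambda>i\<in>I. f i (x i))) (PiE I A)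
        = emeasure (PiM I M) ((\<lambda>x. \<lambda>i\<in>I. f i (x i)) -` PiE I A \<inter> space (PiM I M))"
      using A_N assms(1) by (intro emeasure_distr) (auto intro: sets_PiM_I_finite)
    also have "(\<lambda>x. \<lambda>i\<in>I. f i (x i)) -` PiE I A \<inter> space (PiM I M) = PiE I (\<lambda>i. f i -` A i \<inter> space (M i))"
      by (auto simp: space_PiM PiE_def Pi_def extensional_def)
    also have "emeasure (PiM I M) (PiE I (\<lambda>i. f i -` A i \<inter> space (M i)))
        = emeasure (PiM I M') (PiE I (\<lambda>i. f i -` A i \<inter> space (M i)))"
      by (simp add: PiM_M')
    also have "\<dots> = (\<Prod>i\<in>I. emeasure (N' i) (A i))"
      using A_N by (subst M'.emeasure_PiM[OF assms(1)])
        (auto simp: M'_def N'_def emeasure_distr intro!: prod.cong)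
    finally show "emeasure (distr (PiM I M) (PiM I N) (\<lambda>x. \<lambda>i\<in>I. f i (x i))) (PiE I A)
        = (\<Prod>i\<in>I. emeasure (N' i) (A i))" .
  qed
  also have "\<dots> = PiM I (\<lambda>i. distr (M i) (N i) (f i))"
    by (intro PiM_cong) (auto simp: N'_def)
  finally show ?thesis .
qed

lemma borel_measurable_sign_sum [measurable]:
  assumes [measurable]: "W \<in> borel_measurable (PiM I (\<lambda>_. borel))"
  shows "sign_sum I W \<in> borel_measurable (PiM I (\<lambda>_. borel))"
  unfolding sign_sum_def[abs_def] by measurable

lemma sign_sum_nonneg: "(\<And>\<phi>. 0 \<le> W \<phi>) \<Longrightarrow> 0 \<le> sign_sum I W s"
  unfolding sign_sum_def by (intro sum_nonneg) auto

locale symmetric_real_prob_space = prob_space M for M :: "real measure" +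
  assumes sets_eq_borel: "sets M = sets borel"
    and distr_uminus: "distr M borel uminus = M"
begin

lemma measurable_PiM_component [measurable]: "(\<lambda>\<phi>. \<phi> x) \<in> borel_measurable (PiM I (\<lambda>_. M))"
  by (rule measurable_PiM_component_borel) (simp add: sets_eq_borel)

lemma sets_PiM_eq_borel [measurable_cong]: "sets (PiM I (\<lambda>_. M)) = sets (PiM I (\<lambda>_. borel))"
  by (intro sets_PiM_cong) (simp_all add: sets_eq_borel)

lemma distr_sign_mult:
  assumes "c \<in> {-1, 1}"
  shows "distr M M ((*) c) = M"
proof -
  have "(*) c = (if c = 1 then (\<lambda>x. x) else uminus)"
    using assms by (auto simp: fun_eq_iff)
  moreover have "distr M M uminus = distr M borel uminus"
    by (rule distr_cong) (simp_all add: sets_eq_borel)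
  ultimately show ?thesis
    by (simp add: distr_uminus)
qed

lemma distr_PiM_sign_flip:
  assumes "finite I" and "\<sigma> \<in> PiE I (\<lambda>_. {-1, 1})"
  shows "distr (PiM I (\<lambda>_. M)) (PiM I (\<lambda>_. M)) (\<lambda>\<phi>. \<lambda>x\<in>I. \<sigma> x * \<phi> x) = PiM I (\<lambda>_. M)"
proof -
  have "distr (PiM I (\<lambda>_. M)) (PiM I (\<lambda>_. M)) (\<lambda>\<phi>. \<lambda>x\<in>I. \<sigma> x * \<phi> x)
      = PiM I (\<lambda>x. distr M M ((*) (\<sigma> x)))"
    using assms(1) by (rule distr_PiM_componentwise) (auto intro: prob_space_axioms
      simp: measurable_cong_sets[OF sets_eq_borel sets_eq_borel])
  also have "\<dots> = PiM I (\<lambda>_. M)"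
    using assms(2) by (intro PiM_cong refl distr_sign_mult) auto
  finally show ?thesis .
qed

lemma distr_PiM_abs:
  assumes "finite I"
  shows "distr (PiM I (\<lambda>_. M)) (PiM I (\<lambda>_. borel)) (\<lambda>\<phi>. \<lambda>x\<in>I. \<bar>\<phi> x\<bar>)
           = PiM I (\<lambda>_. distr M borel abs)"
proof -
  let ?abs = "\<lambda>\<phi>. \<lambda>x\<in>I. \<bar>\<phi> x\<bar>" and ?M' = "distr M borel abs"
  have "distr (PiM I (\<lambda>_. M)) (PiM I (\<lambda>_. borel)) ?abs = distr (PiM I (\<lambda>_. M)) (PiM I (\<lambda>_. ?M')) ?abs"
    by (intro distr_cong sets_PiM_cong) simp_all
  also have "\<dots> = PiM I (\<lambda>_. distr M ?M' abs)"
    using assms prob_space_axioms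
    by (subst distr_PiM_componentwise) (auto simp: measurable_cong_sets[OF sets_eq_borel refl])
  also have "\<dots> = PiM I (\<lambda>_. ?M')"
    by (intro PiM_cong distr_cong) simp_all
  finally show ?thesis .
qed

lemma nn_integral_sign_symmetrize:
  assumes "finite I"
    and [measurable]: "F \<in> borel_measurable (PiM I (\<lambda>_. borel))"
    and [measurable]: "W \<in> borel_measurable (PiM I (\<lambda>_. borel))" and W_nonneg: "\<And>\<phi>. 0 \<le> W \<phi>"
  shows "2 ^ card I * (\<integral>\<^sup>+ \<phi>. F (\<lambda>x\<in>I. \<bar>\<phi> x\<bar>) * ennreal (W \<phi>) \<partial>PiM I (\<lambda>_. M))
           = (\<integral>\<^sup>+ s. F s * ennreal (sign_sum I W s) \<partial>PiM I (\<lambda>_. distr M borel abs))"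
proof -
  let ?P = "PiM I (\<lambda>_. M)" and ?S = "PiE I (\<lambda>_. {-1, 1::real})"
  let ?flip = "\<lambda>\<sigma> \<phi>. \<lambda>x\<in>I. \<sigma> x * \<phi> x" and ?abs = "\<lambda>\<phi>. \<lambda>x\<in>I. \<bar>\<phi> x\<bar>"
  have flip_measurable: "?flip \<sigma> \<in> measurable ?P ?P" for \<sigma>
    unfolding measurable_cong_sets[OF sets_PiM_eq_borel sets_PiM_eq_borel] by measurable
  have "card ?S = 2 ^ card I"
    using assms(1) by (simp add: card_funcsetE numeral_2_eq_2)
  then have "2 ^ card I * (\<integral>\<^sup>+ \<phi>. F (?abs \<phi>) * ennreal (W \<phi>) \<partial>?P)
      = (\<Sum>\<sigma>\<in>?S. \<integral>\<^sup>+ \<phi>. F (?abs \<phi>) * ennreal (W \<phi>) \<partial>?P)"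
    by simp
  also have "\<dots> = (\<Sum>\<sigma>\<in>?S. \<integral>\<^sup>+ \<phi>. F (?abs \<phi>) * ennreal (W (?flip \<sigma> \<phi>)) \<partial>?P)"
  proof (rule sum.cong[OF refl])
    fix \<sigma> assume \<sigma>: "\<sigma> \<in> ?S"
    then have "?abs (?flip \<sigma> \<phi>) = ?abs \<phi>" for \<phi>
      by (auto simp: fun_eq_iff PiE_iff abs_mult)
    then have "(\<integral>\<^sup>+ \<phi>. F (?abs \<phi>) * ennreal (W \<phi>) \<partial>distr ?P ?P (?flip \<sigma>))
        = (\<integral>\<^sup>+ \<phi>. F (?abs \<phi>) * ennreal (W (?flip \<sigma> \<phi>)) \<partial>?P)"
      by (subst nn_integral_distr[OF flip_measurable]) simp_all
    then show "(\<integral>\<^sup>+ \<phi>. F (?abs \<phi>) * ennreal (W \<phi>) \<partial>?P)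
        = (\<integral>\<^sup>+ \<phi>. F (?abs \<phi>) * ennreal (W (?flip \<sigma> \<phi>)) \<partial>?P)"
      by (simp add: distr_PiM_sign_flip[OF assms(1) \<sigma>])
  qed
  also have "\<dots> = (\<integral>\<^sup>+ \<phi>. (\<Sum>\<sigma>\<in>?S. F (?abs \<phi>) * ennreal (W (?flip \<sigma> \<phi>))) \<partial>?P)"
    by (rule nn_integral_sum[symmetric]) measurable
  also have "\<dots> = (\<integral>\<^sup>+ \<phi>. F (?abs \<phi>) * ennreal (sign_sum I W (?abs \<phi>)) \<partial>?P)"
    using W_nonneg
    by (simp add: sign_sum_abs sum_distrib_left[symmetric] sum_ennreal)
  also have "\<dots> = (\<integral>\<^sup>+ s. F s * ennreal (sign_sum I W s) \<partial>distr ?P (PiM I (\<lambda>_. borel)) ?abs)"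
    by (rule nn_integral_distr[symmetric]) measurable
  also have "\<dots> = (\<integral>\<^sup>+ s. F s * ennreal (sign_sum I W s) \<partial>PiM I (\<lambda>_. distr M borel abs))"
    by (simp add: distr_PiM_abs[OF assms(1)])
  finally show ?thesis .
qed

lemma distr_density_abs:
  assumes "finite I"
    and [measurable]: "W \<in> borel_measurable (PiM I (\<lambda>_. borel))" and W_nonneg: "\<And>\<phi>. 0 \<le> W \<phi>"
  shows "distr (density (PiM I (\<lambda>_. M)) (\<lambda>\<phi>. ennreal (W \<phi>))) (PiM I (\<lambda>_. borel)) (\<lambda>\<phi>. \<lambda>x\<in>I. \<bar>\<phi> x\<bar>)
           = density (PiM I (\<lambda>_. distr M borel abs)) (\<lambda>s. ennreal (sign_sum I W s / 2 ^ card I))"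
    (is "distr ?D ?B ?abs = density ?Q ?g")
proof (rule measure_eqI)
  show "sets (distr ?D ?B ?abs) = sets (density ?Q ?g)"
    by (simp cong: sets_PiM_cong)
  fix A assume "A \<in> sets (distr ?D ?B ?abs)"
  then have A [measurable]: "A \<in> sets ?B"
    by simp
  have abs_measurable: "?abs \<in> measurable (PiM I (\<lambda>_. M)) ?B"
    unfolding measurable_cong_sets[OF sets_PiM_eq_borel refl] by measurable
  let ?X = "\<integral>\<^sup>+ \<phi>. indicator A (?abs \<phi>) * ennreal (W \<phi>) \<partial>PiM I (\<lambda>_. M)"
  have "emeasure (distr ?D ?B ?abs) A = ?X"
    using abs_measurable
    by (subst emeasure_distr) (auto simp: emeasure_density measurable_sets mult.commute
        intro!: nn_integral_cong split: split_indicator)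
  moreover have "emeasure (density ?Q ?g) A = ennreal (1 / 2 ^ card I)
      * (\<integral>\<^sup>+ s. indicator A s * ennreal (sign_sum I W s) \<partial>?Q)"
    using W_nonneg
    by (subst nn_integral_cmult[symmetric])
       (auto simp: emeasure_density ennreal_mult'[symmetric] sign_sum_nonneg
         intro!: nn_integral_cong split: split_indicator cong: sets_PiM_cong)
  moreover have "(\<integral>\<^sup>+ s. indicator A s * ennreal (sign_sum I W s) \<partial>?Q) = 2 ^ card I * ?X"
    using nn_integral_sign_symmetrize[OF assms(1), of "indicator A" W] W_nonneg by simp
  moreover have "ennreal (1 / 2 ^ card I) * 2 ^ card I = 1"
  proof -
    have "(2::ennreal) ^ card I = ennreal (2 ^ card I)"
      by (simp add: ennreal_power[symmetric])
    then show ?thesis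
      by (simp add: ennreal_mult[symmetric])
  qed
  ultimately show "emeasure (distr ?D ?B ?abs) A = emeasure (density ?Q ?g) A"
    by (simp add: mult.assoc[symmetric])
qed

end

lemma symmetric_real_prob_space_rho: "g > 0 \<Longrightarrow> symmetric_real_prob_space (rho g a)"
  by (intro symmetric_real_prob_space.intro symmetric_real_prob_space_axioms.intro
      prob_space_rho distr_rho_uminus sets_rho)

lemma measurable_PiM_borel_component [measurable]:
  "(\<lambda>t. t x) \<in> borel_measurable (PiM I (\<lambda>_. borel :: real measure))"
  by (rule measurable_PiM_component_borel) simp

lemma borel_measurable_nu_weight [measurable]:
  "nu_weight \<Lambda> \<beta> h \<in> borel_measurable (PiM I (\<lambda>_. borel))"
  unfolding nu_weight_def[abs_def] by measurable

lemma nu_weight_pos: "0 < nu_weight \<Lambda> \<beta> h \<phi>"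
  by (simp add: nu_weight_def)

lemma distr_nu_abs:
  fixes g a \<beta> :: real and h :: "'d::finite site \<Rightarrow> real"
  assumes "g > 0" and "finite \<Lambda>"
  defines "N \<equiv> \<integral>\<psi>. nu_weight \<Lambda> \<beta> h \<psi> \<partial>PiM \<Lambda> (\<lambda>_. rho g a)"
  shows "distr (nu g a \<Lambda> \<beta> h) (PiM \<Lambda> (\<lambda>_. borel)) (\<lambda>\<phi>. \<lambda>x\<in>\<Lambda>. \<bar>\<phi> x\<bar>)
           = density (PiM \<Lambda> (\<lambda>_. rho_tilde g a))
               (\<lambda>s. ennreal (sign_sum \<Lambda> (nu_weight \<Lambda> \<beta> h) s / (2 ^ card \<Lambda> * N)))"
proof -
  interpret rho: symmetric_real_prob_space "rho g a"
    by (rule symmetric_real_prob_space_rho[OF assms(1)])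
  have "0 \<le> N"
    unfolding N_def by (intro integral_nonneg_AE AE_I2 less_imp_le nu_weight_pos)
  then have "distr (nu g a \<Lambda> \<beta> h) (PiM \<Lambda> (\<lambda>_. borel)) (\<lambda>\<phi>. \<lambda>x\<in>\<Lambda>. \<bar>\<phi> x\<bar>)
      = density (PiM \<Lambda> (\<lambda>_. rho_tilde g a))
          (\<lambda>s. ennreal (sign_sum \<Lambda> (\<lambda>\<phi>. nu_weight \<Lambda> \<beta> h \<phi> / N) s / 2 ^ card \<Lambda>))"
    unfolding nu_def N_def[symmetric] rho_tilde_def
    by (intro rho.distr_density_abs assms(2) divide_nonneg_nonneg less_imp_le[OF nu_weight_pos]) simp_all
  then show ?thesis
    by (simp add: sign_sum_def sum_divide_distrib[symmetric] mult.commute)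
qed

lemma nu_normalisation:
  assumes "g > 0" and "finite \<Lambda>"
  shows "2 ^ card \<Lambda> * (\<integral>\<psi>. nu_weight \<Lambda> \<beta> h \<psi> \<partial>PiM \<Lambda> (\<lambda>_. rho g a))
           = enn2real (\<integral>\<^sup>+ s. ennreal (sign_sum \<Lambda> (nu_weight \<Lambda> \<beta> h) s) \<partial>PiM \<Lambda> (\<lambda>_. rho_tilde g a))"
proof -
  interpret rho: symmetric_real_prob_space "rho g a"
    by (rule symmetric_real_prob_space_rho[OF assms(1)])
  have "2 ^ card \<Lambda> * (\<integral>\<^sup>+ \<psi>. ennreal (nu_weight \<Lambda> \<beta> h \<psi>) \<partial>PiM \<Lambda> (\<lambda>_. rho g a))
      = (\<integral>\<^sup>+ s. ennreal (sign_sum \<Lambda> (nu_weight \<Lambda> \<beta> h) s) \<partial>PiM \<Lambda> (\<lambda>_. rho_tilde g a))"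
    using rho.nn_integral_sign_symmetrize[OF assms(2), of "\<lambda>_. 1" "nu_weight \<Lambda> \<beta> h"]
    by (simp add: rho_tilde_def less_imp_le nu_weight_pos)
  moreover have "(\<integral>\<psi>. nu_weight \<Lambda> \<beta> h \<psi> \<partial>PiM \<Lambda> (\<lambda>_. rho g a))
      = enn2real (\<integral>\<^sup>+ \<psi>. ennreal (nu_weight \<Lambda> \<beta> h \<psi>) \<partial>PiM \<Lambda> (\<lambda>_. rho g a))"
    by (rule integral_eq_nn_integral) (auto intro: less_imp_le nu_weight_pos)
  moreover have "(2::ennreal) ^ card \<Lambda> = ennreal (2 ^ card \<Lambda>)"
    by (simp add: ennreal_power[symmetric])
  ultimately show ?thesis
    by (metis enn2real_mult enn2real_ennreal zero_le_numeral zero_le_power)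
qed

lemma free_xi_partition: "partition_on (ext_bd \<Lambda>) (free_xi \<Lambda>)"
  by (rule partition_onI) (auto simp: free_xi_def disjnt_def)

lemma measurable_restrict_A_base:
  "(\<lambda>t. restrict t \<Lambda>) \<in> measurable (A_base g a \<Lambda> b) (PiM \<Lambda> (\<lambda>_. borel))"
proof -
  have "(\<lambda>t. restrict t \<Lambda>) \<in> measurable (PiM (Lbar \<Lambda>) (A_site g a \<Lambda> b)) (PiM \<Lambda> (A_site g a \<Lambda> b))"
    by (rule measurable_restrict_subset) (auto simp: Lbar_def)
  then show ?thesis
    unfolding A_base_eq_PiM_A_site by (simp cong: measurable_cong_sets sets_PiM_cong)
qed

lemma distr_A_base_restrict:
  assumes "g > 0" and "finite \<Lambda>"
  shows "distr (A_base g a \<Lambda> b) (PiM \<Lambda> (\<lambda>_. borel)) (\<lambda>t. restrict t \<Lambda>) = PiM \<Lambda> (\<lambda>_. rho_tilde g a)"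
proof -
  interpret product_prob_space "A_site g a \<Lambda> b"
    by (intro product_prob_spaceI prob_space_A_site[OF assms(1)])
  have "distr (A_base g a \<Lambda> b) (PiM \<Lambda> (\<lambda>_. borel)) (\<lambda>t. restrict t \<Lambda>)
      = distr (PiM (Lbar \<Lambda>) (A_site g a \<Lambda> b)) (PiM \<Lambda> (A_site g a \<Lambda> b)) (\<lambda>t. restrict t \<Lambda>)"
    unfolding A_base_eq_PiM_A_site by (intro distr_cong sets_PiM_cong) simp_all
  also have "\<dots> = PiM \<Lambda> (A_site g a \<Lambda> b)"
    using assms(2) finite_Lbar[OF assms(2)] by (intro distr_restrict[symmetric]) (auto simp: Lbar_def)
  also have "\<dots> = PiM \<Lambda> (\<lambda>_. rho_tilde g a)"
    by (intro PiM_cong) (simp_all add: A_site_def)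
  finally show ?thesis .
qed

locale phi4_free =
  fixes g a :: real and \<Lambda> :: "'d::finite site set" and h :: "'d site \<Rightarrow> real" and \<beta> :: real
  assumes g_pos: "g > 0" and finite_\<Lambda>: "finite \<Lambda>" and h_nonneg: "\<forall>x\<in>\<Lambda>. h x \<ge> 0"
    and \<beta>_nonneg: "\<beta> \<ge> 0"

sublocale phi4_free \<subseteq> phi4_coupling g a \<Lambda> "free_xi \<Lambda>" free_b h \<beta>
  using g_pos finite_\<Lambda> h_nonneg \<beta>_nonneg free_xi_partition
  by unfold_locales (auto simp: free_b_def)

context phi4_free
begin

abbreviation "abs_weight \<equiv> sign_sum \<Lambda> (nu_weight \<Lambda> \<beta> h)"
abbreviation "abs_weight_mass \<equiv> \<integral>\<^sup>+ s. ennreal (abs_weight s) \<partial>PiM \<Lambda> (\<lambda>_. rho_tilde g a)"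

lemma AE_free_boundary:
  "AE t in A. bc_ind \<Lambda> free_b t = 1
                \<and> Z_Ising \<Lambda> (free_xi \<Lambda>) \<beta> h t = 2 ^ card (ext_bd \<Lambda>) * abs_weight (restrict t \<Lambda>)"
  using AE_A_base_boundary[OF g_pos finite_\<Lambda>]
  by eventually_elim (simp add: bc_ind_def Z_Ising_free[OF finite_\<Lambda>] free_b_def)

(* Read off through enn2real, this needs no integrability of the phi^4 weight: an infinite
   abs_weight_mass makes both Z and the normalisation of nu vanish. *)
lemma Z_Psi_free: "Z = 2 * 2 ^ card (ext_bd \<Lambda>) * enn2real abs_weight_mass"
proof -
  have "Z = enn2real (\<integral>\<^sup>+ z. ennreal (\<psi> z) \<partial>J)"
    unfolding Z_Psi_def using AE_joint_base[OF AE_psi_weight_nonneg]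
    by (intro integral_eq_nn_integral) (auto elim: eventually_mono)
  also have "(\<integral>\<^sup>+ z. ennreal (\<psi> z) \<partial>J) = (\<integral>\<^sup>+ t. (\<Sum>\<omega>\<in>\<Omega>. ennreal (\<psi> (\<omega>, t))) \<partial>A)"
    using finite_\<Lambda> by (simp add: nn_integral_joint_base nn_integral_sum)
  also have "\<dots> = (\<integral>\<^sup>+ t. ennreal (2 * 2 ^ card (ext_bd \<Lambda>) * abs_weight (restrict t \<Lambda>)) \<partial>A)"
    using AE_psi_weight_nonneg AE_free_boundary
  proof (intro nn_integral_cong_AE, eventually_elim)
    case (elim t)
    then show ?case
      by (simp add: sum_ennreal sum_psi_weight[OF finite_\<Lambda> free_xi_partition] mult.assoc)
  qed
  also have "\<dots> = (\<integral>\<^sup>+ s. ennreal (2 * 2 ^ card (ext_bd \<Lambda>) * abs_weight s)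
                     \<partial>distr A (PiM \<Lambda> (\<lambda>_. borel)) (\<lambda>t. restrict t \<Lambda>))"
    by (rule nn_integral_distr[symmetric, OF measurable_restrict_A_base]) measurable
  also have "\<dots> = (\<integral>\<^sup>+ s. ennreal (2 * 2 ^ card (ext_bd \<Lambda>)) * ennreal (abs_weight s) \<partial>PiM \<Lambda> (\<lambda>_. rho_tilde g a))"
    by (simp add: distr_A_base_restrict[OF g_pos finite_\<Lambda>] ennreal_mult')
  also have "\<dots> = ennreal (2 * 2 ^ card (ext_bd \<Lambda>)) * abs_weight_mass"
    by (rule nn_integral_cmult) measurable
  finally show ?thesis
    by (simp add: enn2real_mult)
qed

lemma distr_mu_restrict:
  "distr \<mu> (PiM \<Lambda> (\<lambda>_. borel)) (\<lambda>t. restrict t \<Lambda>)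
     = density (PiM \<Lambda> (\<lambda>_. rho_tilde g a)) (\<lambda>s. ennreal (2 * 2 ^ card (ext_bd \<Lambda>) * abs_weight s / Z))"
proof -
  define K where "K s = ennreal (2 * 2 ^ card (ext_bd \<Lambda>) * abs_weight s / Z)" for s
  have [measurable]: "K \<in> borel_measurable (PiM \<Lambda> (\<lambda>_. borel))"
    unfolding K_def by measurable
  have "\<mu> = density A (\<lambda>t. K (restrict t \<Lambda>))"
    unfolding mu_eq_density
  proof (rule density_cong)
    show "(\<lambda>t. K (restrict t \<Lambda>)) \<in> borel_measurable A"
      using measurable_restrict_A_base by measurable
    show "AE t in A. ennreal (2 * bc_ind \<Lambda> free_b t * Z_Ising \<Lambda> (free_xi \<Lambda>) \<beta> h t / Z) = K (restrict t \<Lambda>)"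
      using AE_free_boundary by eventually_elim (simp add: K_def mult.assoc)
  qed (use finite_\<Lambda> in measurable)
  then have "distr \<mu> (PiM \<Lambda> (\<lambda>_. borel)) (\<lambda>t. restrict t \<Lambda>)
      = density (distr A (PiM \<Lambda> (\<lambda>_. borel)) (\<lambda>t. restrict t \<Lambda>)) K"
    by (simp add: density_distr measurable_restrict_A_base)
  then show ?thesis
    by (simp add: distr_A_base_restrict[OF g_pos finite_\<Lambda>] K_def[abs_def])
qed

lemma distr_mu_restrict_eq_distr_nu_abs:
  "distr \<mu> (PiM \<Lambda> (\<lambda>_. borel)) (\<lambda>t. restrict t \<Lambda>)
     = distr (nu g a \<Lambda> \<beta> h) (PiM \<Lambda> (\<lambda>_. borel)) (\<lambda>\<phi>. \<lambda>x\<in>\<Lambda>. \<bar>\<phi> x\<bar>)"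
  unfolding distr_mu_restrict distr_nu_abs[OF g_pos finite_\<Lambda>] nu_normalisation[OF g_pos finite_\<Lambda>]
    Z_Psi_free
  by (simp add: mult.assoc)

end

theorem proposition4p6:
  fixes g a \<beta> :: real and \<Lambda> :: "'d::finite site set"
    and \<xi> :: "'d site set set" and b h :: "'d site \<Rightarrow> real"
  assumes "g > 0"
    and "finite \<Lambda>"
    and "partition_on (ext_bd \<Lambda>) \<xi>"
    and "\<forall>x\<in>ext_bd \<Lambda>. b x \<ge> 0"
    and "\<forall>x\<in>\<Lambda>. h x \<ge> 0"
    and "\<beta> \<ge> 0"
  shows "(\<forall>\<omega>\<in>configs (all_edges \<Lambda> h). \<forall>A\<in>sets (A_base g a \<Lambda> b).
            emeasure (Psi g a \<Lambda> \<xi> b \<beta> h) ({\<omega>} \<times> A)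
              = (\<integral>\<^sup>+ t\<in>A. ennreal (phiFK \<Lambda> \<xi> \<beta> h t \<omega>) \<partial>mu g a \<Lambda> \<xi> b \<beta> h))
       \<and> mu g a \<Lambda> \<xi> b \<beta> h = density (A_base g a \<Lambda> b)
            (\<lambda>t. ennreal (2 * bc_ind \<Lambda> b t * Z_Ising \<Lambda> \<xi> \<beta> h t / Z_Psi g a \<Lambda> \<xi> b \<beta> h))
       \<and> distr (mu g a \<Lambda> (free_xi \<Lambda>) free_b \<beta> h) (PiM \<Lambda> (\<lambda>_. borel)) (\<lambda>t. restrict t \<Lambda>)
           = distr (nu g a \<Lambda> \<beta> h) (PiM \<Lambda> (\<lambda>_. borel)) (\<lambda>\<phi>. \<lambda>x\<in>\<Lambda>. \<bar>\<phi> x\<bar>)"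
proof -
  interpret phi4_coupling g a \<Lambda> \<xi> b h \<beta>
    using assms by unfold_locales
  interpret free: phi4_free g a \<Lambda> h \<beta>
    using assms by unfold_locales
  show ?thesis
    using emeasure_Psi_singleton_Times mu_eq_density free.distr_mu_restrict_eq_distr_nu_abs
    by blast
qed

end
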